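(* Let $n=2$, $S=K[x,y]$, $\mathbf t,\mathbf k\in\mathbb N^2$ with $\mathbf 1\le\mathbf k\le\mathbf t+\mathbf 1$, and let $I$ be a positively $\mathbf t$-determined monomial ideal. Then $H^1\mathcal N^{\mathbf k}_{\mathbf t}(S/I)=0$ if and only if either (i) $(S/I)_{\mathbf t+\mathbf 1-\mathbf k}\ne0$, or (ii) every $\mathbf x\in\mathbb N^2$ with $(S/I)_{\mathbf x}\ne0$ lies in $[\mathbf 0,\mathbf t-\mathbf k]$.
   Context: $K$ a field, $S$ is $\mathbb Z^2$-graded with $\deg x=\varepsilon_1$, $\deg y=\varepsilon_2$; $\mathbf 1=(1,1)$; componentwise order; $[\mathbf a,\mathbf b]=\{\mathbf x:\mathbf a\le\mathbf x\le\mathbf b\}$; $M(\mathbf a)_{\mathbf r}=M_{\mathbf a+\mathbf r}$. A monomial ideal $I$ is positively $\mathbf t$-determined if each minimal generator $x^{a_1}y^{a_2}$ has $\mathbf a\le\mathbf t$; an $\mathbb N^2$-graded module is positively $\mathbf t$-determined if multiplication by the $i$-th variable $M_{\mathbf a}\to M_{\mathbf a+\varepsilon_i}$ is bijective whenever $a_i\ge t_i$. For order-preserving $q:\mathbb N^2\to\mathbb Z^2$, $(q^*M)_{\mathbf a}=M_{q(\mathbf a)}$ with monomials of degree $\mathbf b$ acting via the monomial of degree $q(\mathbf a+\mathbf b)-q(\mathbf a)$; $p_{\mathbf t}(\mathbf a)=(\min(a_i,t_i))_i$. Chain complexes, $H^iC=H_{-i}C$. Nakayama functor: $P_{t\varepsilon_j}$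 is the complex $x_j^tS\hookrightarrow S$ ($S$ in degree 0, $x_1=x,x_2=y$); for $\mathbf k\in\{0,1\}^2$, $P^{\mathbf k}_{\mathbf t}=\bigotimes_jP_{t_j\varepsilon_j}^{\otimes k_j}$ and $\mathcal N^{\mathbf k}_{\mathbf t}(C)=p_{\mathbf t}^*\underline{\operatorname{Hom}}_S(P^{\mathbf k}_{\mathbf t+\mathbf 1},C(-\mathbf k))$; for $\mathbf k\in\mathbb N^2$, $\mathcal N^{\mathbf k}_{\mathbf t}=(\mathcal N^{\varepsilon_1}_{\mathbf t})^{\circ k_1}\circ(\mathcal N^{\varepsilon_2}_{\mathbf t})^{\circ k_2}$. *)

theory Defs
  imports Main
begin

text \<open>
Concrete model of Z^2-graded chain complexes of modules over S = K[x,y].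
Elements of every graded piece live in the uniform type  bool list => K
(a direct sum encoding; pairs (u,w) are encoded by tagging with False/True).
A complex C consists of
  cc C n a      : the K-subspace of homological degree n and multidegree a,
  dd C n a      : the differential  C_n,a -> C_(n-1),a,
  mul C j n a   : multiplication by the j-th variable (j=1: x, j=2: y),
                  C_n,a -> C_n,(a+eps j).
\<close>

type_synonym 'k vec = "bool list \<Rightarrow> 'k"

record 'k gcx =
  cc  :: "int \<Rightarrow> int \<times> int \<Rightarrow> 'k vec set"
  dd  :: "int \<Rightarrow> int \<times> int \<Rightarrow> 'k vec \<Rightarrow> 'k vec"
  mul :: "nat \<Rightarrow> int \<Rightarrow> int \<times> int \<Rightarrow> 'k vec \<Rightarrow> 'k vec"

definition zv :: "'k::zero vec" where "zv = (\<lambda>_. 0)"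

definition vsub :: "'k::minus vec \<Rightarrow> 'k vec \<Rightarrow> 'k vec" where
  "vsub u w = (\<lambda>l. u l - w l)"

definition vneg :: "'k::uminus vec \<Rightarrow> 'k vec" where
  "vneg u = (\<lambda>l. - u l)"

definition constv :: "'k::zero \<Rightarrow> 'k vec" where
  "constv c = (\<lambda>l. if l = [] then c else 0)"

definition pr :: "'k::zero vec \<Rightarrow> 'k vec \<Rightarrow> 'k vec" where
  "pr u w = (\<lambda>l. case l of [] \<Rightarrow> 0 | b # l' \<Rightarrow> (if b then w l' else u l'))"

definition fstv :: "'k vec \<Rightarrow> 'k vec" where "fstv f = (\<lambda>l. f (False # l))"
definition sndv :: "'k vec \<Rightarrow> 'k vec" where "sndv f = (\<lambda>l. f (True # l))"

definition eps :: "nat \<Rightarrow> int \<times> int" where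
  "eps j = (if j = 1 then (1,0) else if j = 2 then (0,1) else (0,0))"

definition padd :: "int \<times> int \<Rightarrow> int \<times> int \<Rightarrow> int \<times> int" where
  "padd a b = (fst a + fst b, snd a + snd b)"

definition psub :: "int \<times> int \<Rightarrow> int \<times> int \<Rightarrow> int \<times> int" where
  "psub a b = (fst a - fst b, snd a - snd b)"

definition psc :: "int \<Rightarrow> int \<times> int \<Rightarrow> int \<times> int" where
  "psc s a = (s * fst a, s * snd a)"

definition pint :: "nat \<times> nat \<Rightarrow> int \<times> int" where
  "pint a = (int (fst a), int (snd a))"

definition nonneg :: "int \<times> int \<Rightarrow> bool" where
  "nonneg a \<longleftrightarrow> 0 \<le> fst a \<and> 0 \<le> snd a"

definition ple :: "int \<times> int \<Rightarrow> int \<times> int \<Rightarrow> bool" where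
  "ple a b \<longleftrightarrow> fst a \<le> fst b \<and> snd a \<le> snd b"

definition nle :: "nat \<times> nat \<Rightarrow> nat \<times> nat \<Rightarrow> bool" where
  "nle a b \<longleftrightarrow> fst a \<le> fst b \<and> snd a \<le> snd b"

fun mulpow :: "'k gcx \<Rightarrow> nat \<Rightarrow> int \<Rightarrow> int \<times> int \<Rightarrow> nat \<Rightarrow> 'k vec \<Rightarrow> 'k vec" where
  "mulpow C j n a 0 v = v"
| "mulpow C j n a (Suc m) v = mul C j n (padd a (psc (int m) (eps j))) (mulpow C j n a m v)"

text \<open>Hom_S(P_{s eps_j}, C), where P_{s eps_j} is the complex x_j^s S \<hookrightarrow> S
  (S in homological degree 0, x_j^s S = S(-s eps_j) in degree 1).
  A degree-n element at multidegree r is a pair (u,w), u in (C_n)_r, w in (C_(n+1))_(r + s eps_j);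
  differential D f = d o f - (-1)^n f o d_P.\<close>
definition homP :: "nat \<Rightarrow> nat \<Rightarrow> 'k::comm_ring_1 gcx \<Rightarrow> 'k gcx" where
  "homP j s C = \<lparr>
     cc = (\<lambda>n r. {pr u w | u w. u \<in> cc C n r \<and> w \<in> cc C (n+1) (padd r (psc (int s) (eps j)))}),
     dd = (\<lambda>n r f. pr (dd C n r (fstv f))
                      (vsub (dd C (n+1) (padd r (psc (int s) (eps j))) (sndv f))
                            (if even n then mulpow C j n r s (fstv f)
                             else vneg (mulpow C j n r s (fstv f))))),
     mul = (\<lambda>i n r f. pr (mul C i n r (fstv f))
                          (mul C i (n+1) (padd r (psc (int s) (eps j))) (sndv f))) \<rparr>"

definition twistneg :: "'k gcx \<Rightarrow> int \<times> int \<Rightarrow> 'k gcx" where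
  "twistneg C b = \<lparr> cc = (\<lambda>n r. cc C n (psub r b)),
                    dd = (\<lambda>n r. dd C n (psub r b)),
                    mul = (\<lambda>i n r. mul C i n (psub r b)) \<rparr>"

definition ptr :: "nat \<times> nat \<Rightarrow> int \<times> int \<Rightarrow> int \<times> int" where
  "ptr t a = (min (fst a) (int (fst t)), min (snd a) (int (snd t)))"

definition pullback :: "nat \<times> nat \<Rightarrow> 'k::zero gcx \<Rightarrow> 'k gcx" where
  "pullback t C = \<lparr>
     cc = (\<lambda>n a. if nonneg a then cc C n (ptr t a) else {zv}),
     dd = (\<lambda>n a v. if nonneg a then dd C n (ptr t a) v else zv),
     mul = (\<lambda>i n a v. if nonneg a then
                         (if ptr t (padd a (eps i)) = ptr t a then v else mul C i n (ptr t a) v)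
                       else zv) \<rparr>"

text \<open>N^{eps_j}_t(C) = p_t^* Hom_S(P_{(t_j+1) eps_j}, C(-eps_j))\<close>
definition tcomp :: "nat \<times> nat \<Rightarrow> nat \<Rightarrow> nat" where
  "tcomp t j = (if j = 1 then fst t else snd t)"

definition nak1 :: "nat \<Rightarrow> nat \<times> nat \<Rightarrow> 'k::comm_ring_1 gcx \<Rightarrow> 'k gcx" where
  "nak1 j t C = pullback t (homP j (tcomp t j + 1) (twistneg C (eps j)))"

definition nak :: "nat \<times> nat \<Rightarrow> nat \<times> nat \<Rightarrow> 'k::comm_ring_1 gcx \<Rightarrow> 'k gcx" where
  "nak t k C = ((nak1 1 t) ^^ (fst k)) (((nak1 2 t) ^^ (snd k)) C)"

text \<open>Monomial ideals of K[x,y], represented by the (upward closed) set of exponent vectors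
  of the monomials they contain.\<close>
definition monomial_ideal :: "(nat \<times> nat) set \<Rightarrow> bool" where
  "monomial_ideal I \<longleftrightarrow> (\<forall>a\<in>I. \<forall>b. nle a b \<longrightarrow> b \<in> I)"

definition min_gens :: "(nat \<times> nat) set \<Rightarrow> (nat \<times> nat) set" where
  "min_gens I = {m \<in> I. \<forall>b\<in>I. nle b m \<longrightarrow> b = m}"

definition pos_t_determined :: "nat \<times> nat \<Rightarrow> (nat \<times> nat) set \<Rightarrow> bool" where
  "pos_t_determined t I \<longleftrightarrow> (\<forall>m\<in>min_gens I. nle m t)"

text \<open>S/I as a complex concentrated in homological degree 0; (S/I)_a = K if a in N^2 and x^a notin I,
  and 0 otherwise\<close>
definition in_supp :: "(nat \<times> nat) set \<Rightarrow> int \<times> int \<Rightarrow> bool" where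
  "in_supp I a \<longleftrightarrow> nonneg a \<and> (nat (fst a), nat (snd a)) \<notin> I"

definition quot :: "(nat \<times> nat) set \<Rightarrow> 'k::zero gcx" where
  "quot I = \<lparr>
     cc = (\<lambda>n a. if n = 0 \<and> in_supp I a then range constv else {zv}),
     dd = (\<lambda>n a v. zv),
     mul = (\<lambda>i n a v. if n = 0 \<and> in_supp I a \<and> in_supp I (padd a (eps i)) then v else zv) \<rparr>"

definition homology_zero :: "'k::zero gcx \<Rightarrow> int \<Rightarrow> bool" where
  "homology_zero C i \<longleftrightarrow>
     (\<forall>a. \<forall>z\<in>cc C i a. dd C i a z = zv \<longrightarrow> (\<exists>b\<in>cc C (i+1) a. dd C (i+1) a b = z))"

definition cohomology_zero :: "'k::zero gcx \<Rightarrow> int \<Rightarrow> bool" where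
  "cohomology_zero C i \<longleftrightarrow> homology_zero C (- i)"

end

theory Submission
  imports Defs
begin

(*
  Strategy.  N^k_t(S/I) is computed completely explicitly, as a complex with a basis of words.

  Every complex in the proof is a basis complex: its piece in homological degree n
     and multidegree a consists of the K-valued functions supported on a set S n a of words over
     {False, True}; multiplication by a variable restricts the support to the words of the target
     multidegree, and the differential bdiff S switches off one letter True at a time, with
     Koszul signs.  For basis complexes, vanishing of homology is a statement about words only
     (homology_zero_basis).
  2. S/I is a basis complex whose words are the empty word on the support of S/I, and one
     Nakayama step N^{eps_j}_t turns a basis complex on S into one on nak1_basis j t S, which
     prepends False (component C) or True (shifted component) to the words.
  3. Unwinding the k1 + k2 steps describes the words of N^k_t(S/I) as pairs of blocks of
     lengths k1 and k2, read as lattice walks (admissible, final_coord): nak_basis_char.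
  4. In degree -1 the words have a single letter True.  If the corner t+1-k lies in the support,
     every 1-cycle is constant and bounds; if the support lies in [0, t-k] there are no such
     words; otherwise an indicator function of degree -1 words is a cycle that does not bound.
*)

section \<open>Complexes with a basis of words\<close>

definition restrict :: "bool list set \<Rightarrow> 'k::zero vec \<Rightarrow> 'k vec" where
  "restrict S v = (\<lambda>l. if l \<in> S then v l else 0)"

abbreviation supported :: "bool list set \<Rightarrow> 'k::zero vec \<Rightarrow> bool" where
  "supported A v \<equiv> \<forall>l. v l \<noteq> 0 \<longrightarrow> l \<in> A"

definition ntrue :: "bool list \<Rightarrow> nat" where "ntrue l = length (filter id l)"

definition true_pos :: "bool list \<Rightarrow> nat set" where "true_pos l = {j. j < length l \<and> l ! j}"

definition dsign :: "int \<Rightarrow> bool list \<Rightarrow> nat \<Rightarrow> 'k::comm_ring_1" where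
  "dsign n l j = (if even (n + int (ntrue (take j l))) then -1 else 1)"

definition bdiff :: "(int \<Rightarrow> int \<times> int \<Rightarrow> bool list set) \<Rightarrow> int \<Rightarrow> int \<times> int \<Rightarrow> 'k::comm_ring_1 vec \<Rightarrow> 'k vec" where
  "bdiff S n a v = (\<lambda>l. if l \<in> S (n-1) a then (\<Sum>j\<in>true_pos l. dsign n l j * v (l[j:=False])) else 0)"

definition basis_complex :: "'k::comm_ring_1 gcx \<Rightarrow> (int \<Rightarrow> int \<times> int \<Rightarrow> bool list set) \<Rightarrow> bool" where
"basis_complex D S \<longleftrightarrow>
 (\<forall>n a. cc D n a = {v. supported (S n a) v}) \<and>
 (\<forall>n a. \<not> nonneg a \<longrightarrow> S n a = {}) \<and>
 (\<forall>n b i l m m'. nonneg b \<longrightarrow> m' \<le> m \<longrightarrow> l \<in> S n b \<longrightarrow> l \<in> S n (padd b (psc (int m) (eps i)))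
     \<longrightarrow> l \<in> S n (padd b (psc (int m') (eps i)))) \<and>
 (\<forall>i n a v. v \<in> cc D n a \<longrightarrow> mul D i n a v = restrict (S n (padd a (eps i))) v) \<and>
 (\<forall>n a v. v \<in> cc D n a \<longrightarrow> dd D n a v = bdiff S n a v)"

lemma basis_complex_cc: "basis_complex D S \<Longrightarrow> cc D n a = {v. \<forall>l. v l \<noteq> 0 \<longrightarrow> l \<in> S n a}"
  unfolding basis_complex_def by blast

lemma basis_complex_nonneg: "basis_complex D S \<Longrightarrow> l \<in> S n a \<Longrightarrow> nonneg a"
  unfolding basis_complex_def by blast

lemma basis_complex_convex: "basis_complex D S \<Longrightarrow> nonneg b \<Longrightarrow> m' \<le> m \<Longrightarrow> l \<in> S n b \<Longrightarrow> l \<in> S n (padd b (psc (int m) (eps i)))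
     \<Longrightarrow> l \<in> S n (padd b (psc (int m') (eps i)))"
  unfolding basis_complex_def by blast

lemma basis_complex_mul: "basis_complex D S \<Longrightarrow> v \<in> cc D n a \<Longrightarrow> mul D i n a v = restrict (S n (padd a (eps i))) v"
  unfolding basis_complex_def by blast

lemma basis_complex_dd: "basis_complex D S \<Longrightarrow> v \<in> cc D n a \<Longrightarrow> dd D n a v = bdiff S n a v"
  unfolding basis_complex_def by blast

lemma homology_zero_basis:
  fixes D :: "'k::comm_ring_1 gcx"
  assumes basis: "basis_complex D S"
  shows "homology_zero D i \<longleftrightarrow> (\<forall>a (z::'k vec). supported (S i a) z \<and> bdiff S i a z = zv
     \<longrightarrow> (\<exists>b. supported (S (i+1) a) b \<and> bdiff S (i+1) a b = z))"
  unfolding homology_zero_def basis_complex_cc[OF basis]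
  by (auto simp: basis_complex_cc[OF basis] basis_complex_dd[OF basis])

section \<open>One Nakayama step preserves word bases\<close>

definition nak1_basis :: "nat \<Rightarrow> nat \<times> nat \<Rightarrow> (int \<Rightarrow> int \<times> int \<Rightarrow> bool list set) \<Rightarrow> int \<Rightarrow> int \<times> int \<Rightarrow> bool list set" where
  "nak1_basis j t S n a = (if nonneg a then Cons False ` S n (psub (ptr t a) (eps j))
       \<union> Cons True ` S (n+1) (padd (ptr t a) (psc (int (tcomp t j)) (eps j))) else {})"

lemma mulpow_twist: "mulpow (twistneg D e) j n r m v = mulpow D j n (psub r e) m v"
proof (induction m)
  case 0 then show ?case by simp
next
  case (Suc m)
  have "psub (padd r (psc (int m) (eps j))) e = padd (psub r e) (psc (int m) (eps j))"
    by (simp add: psub_def padd_def)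
  then show ?case using Suc by (simp add: twistneg_def)
qed

lemma mulpow_along_path:
  assumes basis: "basis_complex D S" and v: "v \<in> cc D n b"
  shows "mulpow D j n b m v = restrict {l. \<forall>i\<le>m. l \<in> S n (padd b (psc (int i) (eps j)))} v
         \<and> mulpow D j n b m v \<in> cc D n (padd b (psc (int m) (eps j)))"
proof (induction m)
  case 0
  have pb: "padd b (psc 0 (eps j)) = b" by (simp add: padd_def psc_def)
  have "restrict {l. \<forall>i\<le>0::nat. l \<in> S n (padd b (psc (int i) (eps j)))} v = v"
    using v basis pb by (auto simp: restrict_def basis_complex_cc[OF basis] fun_eq_iff)
  then show ?case using v pb by simp
next
  case (Suc m)
  let ?w = "mulpow D j n b m v"
  have w: "?w \<in> cc D n (padd b (psc (int m) (eps j)))" using Suc by blast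
  have pe: "padd (padd b (psc (int m) (eps j))) (eps j) = padd b (psc (int (Suc m)) (eps j))"
    by (simp add: padd_def psc_def algebra_simps)
  have eq: "mulpow D j n b (Suc m) v = restrict (S n (padd b (psc (int (Suc m)) (eps j)))) ?w"
    using basis_complex_mul[OF basis w, of j] pe by simp
  have "restrict (S n (padd b (psc (int (Suc m)) (eps j)))) ?w
       = restrict {l. \<forall>i\<le>Suc m. l \<in> S n (padd b (psc (int i) (eps j)))} v"
    using Suc by (auto simp: restrict_def fun_eq_iff le_Suc_eq)
  moreover have "restrict (S n (padd b (psc (int (Suc m)) (eps j)))) ?w \<in> cc D n (padd b (psc (int (Suc m)) (eps j)))"
    by (auto simp: basis_complex_cc[OF basis] restrict_def)
  ultimately show ?case using eq by simp
qed

text \<open>By convexity these are just the words present at the target multidegree.\<close>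
lemma mulpow_basis:
  assumes basis: "basis_complex D S" and v: "v \<in> cc D n b"
  shows "mulpow D j n b m v = restrict (S n (padd b (psc (int m) (eps j)))) v"
proof -
  have "restrict {l. \<forall>i\<le>m. l \<in> S n (padd b (psc (int i) (eps j)))} v = restrict (S n (padd b (psc (int m) (eps j)))) v"
  proof (rule ext)
    fix l
    show "restrict {l. \<forall>i\<le>m. l \<in> S n (padd b (psc (int i) (eps j)))} v l = restrict (S n (padd b (psc (int m) (eps j)))) v l"
    proof (cases "v l = 0")
      case True then show ?thesis by (simp add: restrict_def)
    next
      case False
      then have lb: "l \<in> S n b" using v basis_complex_cc[OF basis] by blast
      have nb: "nonneg b" using basis_complex_nonneg[OF basis lb] .
      { assume lm: "l \<in> S n (padd b (psc (int m) (eps j)))"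
        have "\<forall>i\<le>m. l \<in> S n (padd b (psc (int i) (eps j)))"
          using basis_complex_convex[OF basis nb _ lb lm] by blast }
      then show ?thesis by (auto simp: restrict_def)
    qed
  qed
  then show ?thesis using mulpow_along_path[OF basis v] by simp
qed

lemma shift_eq: "psub (padd r (psc (1 + int s) e)) e = padd r (psc (int s) e)"
  by (simp add: psub_def padd_def psc_def algebra_simps)

lemma pr_split:
  assumes "supported (Cons False ` A \<union> Cons True ` B) v"
  shows "pr (fstv v) (sndv v) = v"
proof (rule ext)
  fix l show "pr (fstv v) (sndv v) l = v l"
  proof (cases l)
    case Nil
    then have "v l = 0" using assms by auto
    then show ?thesis using Nil by (simp add: pr_def)
  next
    case (Cons b l') then show ?thesis by (cases b) (auto simp: pr_def fstv_def sndv_def)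
  qed
qed

lemma pair_supported:
  "{pr u w | u w. supported A u \<and> supported B w} = {v :: 'k::zero vec. supported (Cons False ` A \<union> Cons True ` B) v}"
proof (intro set_eqI iffI)
  fix v :: "'k vec" assume "v \<in> {pr u w | u w. supported A u \<and> supported B w}"
  then obtain u w where v: "v = pr u w" and u: "supported A u" and w: "supported B w" by blast
  show "v \<in> {v. supported (Cons False ` A \<union> Cons True ` B) v}"
  proof (intro CollectI allI impI)
    fix l assume "v l \<noteq> 0"
    then show "l \<in> Cons False ` A \<union> Cons True ` B" using u w unfolding v
      by (cases l) (auto simp: pr_def split: if_splits)
  qed
next
  fix v :: "'k vec" assume "v \<in> {v. supported (Cons False ` A \<union> Cons True ` B) v}"
  then have v: "supported (Cons False ` A \<union> Cons True ` B) v" by blast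
  have "supported A (fstv v)" "supported B (sndv v)" using v by (auto simp: fstv_def sndv_def)
  moreover have "v = pr (fstv v) (sndv v)" using pr_split[OF v] by simp
  ultimately show "v \<in> {pr u w | u w. supported A u \<and> supported B w}" by blast
qed

lemma pr_restrict: "pr (restrict A u) (restrict B w) = restrict (Cons False ` A \<union> Cons True ` B) (pr u w)"
proof (rule ext)
  fix l show "pr (restrict A u) (restrict B w) l = restrict (Cons False ` A \<union> Cons True ` B) (pr u w) l"
    by (cases l) (auto simp: pr_def restrict_def)
qed

lemma cc_nak1:
  fixes D :: "'k::comm_ring_1 gcx"
  assumes basis: "basis_complex D S"
  shows "cc (nak1 j t D) n a = {v. supported (nak1_basis j t S n a) v}"
proof (cases "nonneg a")
  case False
  then show ?thesis by (auto simp: nak1_def pullback_def nak1_basis_def zv_def fun_eq_iff)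
next
  case True
  let ?r1 = "psub (ptr t a) (eps j)"
  let ?r2 = "padd (ptr t a) (psc (int (tcomp t j)) (eps j))"
  have "cc (nak1 j t D) n a = {pr u w |u w. u \<in> cc D n ?r1 \<and> w \<in> cc D (n+1) ?r2}"
    using True by (simp add: nak1_def pullback_def homP_def twistneg_def shift_eq)
  then show ?thesis
    unfolding basis_complex_cc[OF basis] mem_Collect_eq pair_supported using True by (simp add: nak1_basis_def)
qed

lemma cc_nak1_components:
  fixes D :: "'k::comm_ring_1 gcx"
  assumes basis: "basis_complex D S" and a: "nonneg a" and v: "v \<in> cc (nak1 j t D) n a"
  shows "fstv v \<in> cc D n (psub (ptr t a) (eps j))"
    and "sndv v \<in> cc D (n+1) (padd (ptr t a) (psc (int (tcomp t j)) (eps j)))"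
  using v a by (auto simp: cc_nak1[OF basis] basis_complex_cc[OF basis] fstv_def sndv_def nak1_basis_def)

lemma nonneg_padd_eps: "nonneg a \<Longrightarrow> nonneg (padd a (eps i))"
  by (simp add: nonneg_def padd_def eps_def)

lemma ptr_step: "ptr t (padd a (eps i)) \<noteq> ptr t a \<Longrightarrow> ptr t (padd a (eps i)) = padd (ptr t a) (eps i)"
  by (auto simp: ptr_def padd_def eps_def split: if_splits)

lemma restrict_self: "supported A v \<Longrightarrow> restrict A v = v"
  by (auto simp: restrict_def fun_eq_iff)

text \<open>Multiplication on the pullback p_t^* is the identity where p_t is constant and the
  multiplication of Hom_S(P, C) otherwise; in both cases it is restriction of words.\<close>
lemma mul_nak1:
  fixes D :: "'k::comm_ring_1 gcx"
  assumes basis: "basis_complex D S" and v: "v \<in> cc (nak1 j t D) n a"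
  shows "mul (nak1 j t D) i n a v = restrict (nak1_basis j t S n (padd a (eps i))) v"
proof (cases "nonneg a")
  case False
  then have "v = zv" using v cc_nak1[OF basis] by (auto simp: nak1_basis_def zv_def fun_eq_iff)
  then show ?thesis using False by (simp add: nak1_def pullback_def restrict_def zv_def fun_eq_iff)
next
  case True
  have nn: "nonneg (padd a (eps i))" using nonneg_padd_eps[OF True] .
  have vS: "supported (nak1_basis j t S n a) v" using v cc_nak1[OF basis] by blast
  show ?thesis
  proof (cases "ptr t (padd a (eps i)) = ptr t a")
    case True2: True
    have "nak1_basis j t S n (padd a (eps i)) = nak1_basis j t S n a"
      using nn True True2 by (simp add: nak1_basis_def)
    then show ?thesis using True True2 restrict_self[OF vS] by (simp add: nak1_def pullback_def)
  next
    case False2: False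
    let ?r1 = "psub (ptr t a) (eps j)"
    let ?r2 = "padd (ptr t a) (psc (int (tcomp t j)) (eps j))"
    have pe: "ptr t (padd a (eps i)) = padd (ptr t a) (eps i)" using ptr_step[OF False2] .
    note u = cc_nak1_components(1)[OF basis True v] and w = cc_nak1_components(2)[OF basis True v]
    have "mul (nak1 j t D) i n a v = pr (mul D i n ?r1 (fstv v)) (mul D i (n+1) ?r2 (sndv v))"
      using True False2 by (simp add: nak1_def pullback_def homP_def twistneg_def shift_eq)
    moreover have "padd ?r1 (eps i) = psub (ptr t (padd a (eps i))) (eps j)"
      and "padd ?r2 (eps i) = padd (ptr t (padd a (eps i))) (psc (int (tcomp t j)) (eps j))"
      using pe by (simp_all add: padd_def psub_def)
    moreover have "pr (fstv v) (sndv v) = v" using vS True by (intro pr_split) (simp add: nak1_basis_def)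
    ultimately show ?thesis
      using nn by (simp add: basis_complex_mul[OF basis u] basis_complex_mul[OF basis w] pr_restrict nak1_basis_def)
  qed
qed

text \<open>Along a ray in direction eps_i, p_t is again a (shorter) ray in direction eps_i; this
  transports the convexity of S to nak1_basis j t S.\<close>
lemma nonneg_padd_psc: "nonneg b \<Longrightarrow> nonneg (padd b (psc (int m) (eps i)))"
  by (simp add: nonneg_def padd_def psc_def eps_def)

lemma ptr_segment:
  assumes "m' \<le> m"
  shows "\<exists>\<mu> \<mu>'. \<mu>' \<le> \<mu> \<and> ptr t (padd b (psc (int m) (eps i))) = padd (ptr t b) (psc (int \<mu>) (eps i))
     \<and> ptr t (padd b (psc (int m') (eps i))) = padd (ptr t b) (psc (int \<mu>') (eps i))"
proof -
  consider "i = 1" | "i = 2" | "i \<noteq> 1 \<and> i \<noteq> 2" by blast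
  then show ?thesis
  proof cases
    case 1
    let ?f = "\<lambda>x::nat. nat (min (fst b + int x) (int (fst t)) - min (fst b) (int (fst t)))"
    have "?f m' \<le> ?f m" using assms by (intro nat_mono) linarith
    then show ?thesis using 1
      by (intro exI[of _ "?f m"] exI[of _ "?f m'"]) (auto simp: ptr_def padd_def psc_def eps_def)
  next
    case 2
    let ?f = "\<lambda>x::nat. nat (min (snd b + int x) (int (snd t)) - min (snd b) (int (snd t)))"
    have "?f m' \<le> ?f m" using assms by (intro nat_mono) linarith
    then show ?thesis using 2
      by (intro exI[of _ "?f m"] exI[of _ "?f m'"]) (auto simp: ptr_def padd_def psc_def eps_def)
  next
    case 3
    then show ?thesis
      by (intro exI[of _ 0] exI[of _ 0]) (auto simp: ptr_def padd_def psc_def eps_def)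
  qed
qed

lemma nak1_basis_convex:
  assumes basis: "basis_complex D S" and nb: "nonneg b" and mm: "m' \<le> m"
    and l1: "l \<in> nak1_basis j t S n b" and l2: "l \<in> nak1_basis j t S n (padd b (psc (int m) (eps i)))"
  shows "l \<in> nak1_basis j t S n (padd b (psc (int m') (eps i)))"
proof -
  obtain \<mu> \<mu>' where mu: "\<mu>' \<le> \<mu>" and p1: "ptr t (padd b (psc (int m) (eps i))) = padd (ptr t b) (psc (int \<mu>) (eps i))"
     and p2: "ptr t (padd b (psc (int m') (eps i))) = padd (ptr t b) (psc (int \<mu>') (eps i))"
    using ptr_segment[OF mm] by blast
  have nm: "nonneg (padd b (psc (int m) (eps i)))" "nonneg (padd b (psc (int m') (eps i)))"
    using nonneg_padd_psc[OF nb] by auto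
  have A1: "psub (padd x y) z = padd (psub x z) y" for x y z :: "int \<times> int" by (simp add: psub_def padd_def)
  have A2: "padd (padd x y) z = padd (padd x z) y" for x y z :: "int \<times> int" by (simp add: padd_def)
  let ?r1 = "psub (ptr t b) (eps j)"
  let ?r2 = "padd (ptr t b) (psc (int (tcomp t j)) (eps j))"
  show ?thesis
  proof (cases l)
    case Nil then show ?thesis using l1 by (auto simp: nak1_basis_def split: if_splits)
  next
    case (Cons c l')
    show ?thesis
    proof (cases c)
      case False
      have a: "l' \<in> S n ?r1" using l1 nb Cons False by (auto simp: nak1_basis_def)
      have b: "l' \<in> S n (padd ?r1 (psc (int \<mu>) (eps i)))" using l2 nm Cons False p1 by (auto simp: nak1_basis_def A1)
      have "l' \<in> S n (padd ?r1 (psc (int \<mu>') (eps i)))"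
        using basis_complex_convex[OF basis basis_complex_nonneg[OF basis a] mu a b] .
      then show ?thesis using nm Cons False p2 by (auto simp: nak1_basis_def A1)
    next
      case True
      have a: "l' \<in> S (n+1) ?r2" using l1 nb Cons True by (auto simp: nak1_basis_def)
      have b: "l' \<in> S (n+1) (padd ?r2 (psc (int \<mu>) (eps i)))" using l2 nm Cons True p1 by (auto simp: nak1_basis_def A2)
      have "l' \<in> S (n+1) (padd ?r2 (psc (int \<mu>') (eps i)))"
        using basis_complex_convex[OF basis basis_complex_nonneg[OF basis a] mu a b] .
      then show ?thesis using nm Cons True p2 by (auto simp: nak1_basis_def A2)
    qed
  qed
qed

lemma true_pos_Nil[simp]: "true_pos [] = {}" by (simp add: true_pos_def)
lemma true_pos_False[simp]: "true_pos (False # l) = Suc ` true_pos l"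
  apply (rule set_eqI) subgoal for x by (cases x) (auto simp: true_pos_def) done
lemma true_pos_True[simp]: "true_pos (True # l) = insert 0 (Suc ` true_pos l)"
  apply (rule set_eqI) subgoal for x by (cases x) (auto simp: true_pos_def) done
lemma finite_true_pos[simp]: "finite (true_pos l)" by (simp add: true_pos_def)

lemma dsign_False_Suc[simp]: "dsign n (False#l) (Suc j) = dsign n l j" by (simp add: dsign_def ntrue_def)
lemma dsign_True_Suc[simp]: "dsign n (True#l) (Suc j) = dsign (n+1) l j"
proof -
  have "n + int (Suc c) = (n+1) + int c" for c by simp
  then show ?thesis by (simp add: dsign_def ntrue_def)
qed
lemma dsign_True_0[simp]: "dsign n (True#l) 0 = (if even n then -1 else 1)" by (simp add: dsign_def ntrue_def)

text \<open>The index sets are written as the simplifier normalises true_pos (False # l) and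
  true_pos (True # l).\<close>
lemma koszul_sum_False:
  "(\<Sum>i\<in>Suc ` true_pos l. dsign n (False # l) i * v ((False # l)[i := False]))
     = (\<Sum>i\<in>true_pos l. dsign n l i * v (False # l[i := False]))"
  by (subst sum.reindex) auto

lemma koszul_sum_True:
  "(\<Sum>i\<in>insert 0 (Suc ` true_pos l). dsign n (True # l) i * v ((True # l)[i := False]))
     = dsign n (True # l) 0 * v (False # l) + (\<Sum>i\<in>true_pos l. dsign (n+1) l i * v (True # l[i := False]))"
  by (subst sum.insert) (auto simp: sum.reindex)

lemma dd_nak1_components:
  fixes D :: "'k::comm_ring_1 gcx"
  assumes basis: "basis_complex D S" and a: "nonneg a"
    and u: "fstv v \<in> cc D n (psub (ptr t a) (eps j))"
  defines "r2 \<equiv> padd (ptr t a) (psc (int (tcomp t j)) (eps j))"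
  shows "dd (nak1 j t D) n a v = pr (dd D n (psub (ptr t a) (eps j)) (fstv v))
             (vsub (dd D (n+1) r2 (sndv v))
               (if even n then restrict (S n r2) (fstv v) else vneg (restrict (S n r2) (fstv v))))"
proof -
  let ?r1 = "psub (ptr t a) (eps j)"
  have "padd ?r1 (psc (int (tcomp t j + 1)) (eps j)) = r2"
    by (simp add: r2_def padd_def psub_def psc_def algebra_simps)
  then have mp: "mulpow (twistneg D (eps j)) j n (ptr t a) (tcomp t j + 1) (fstv v) = restrict (S n r2) (fstv v)"
    using mulpow_basis[OF basis u, of j "tcomp t j + 1"] by (simp only: mulpow_twist)
  have "dd (nak1 j t D) n a v = pr (dd (twistneg D (eps j)) n (ptr t a) (fstv v))
           (vsub (dd (twistneg D (eps j)) (n+1) (padd (ptr t a) (psc (int (tcomp t j + 1)) (eps j))) (sndv v))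
             (if even n then mulpow (twistneg D (eps j)) j n (ptr t a) (tcomp t j + 1) (fstv v)
              else vneg (mulpow (twistneg D (eps j)) j n (ptr t a) (tcomp t j + 1) (fstv v))))"
    using a unfolding nak1_def pullback_def homP_def by (simp only: gcx.simps if_True)
  then show ?thesis unfolding mp by (simp add: r2_def twistneg_def shift_eq)
qed

lemma dd_nak1:
  fixes D :: "'k::comm_ring_1 gcx"
  assumes basis: "basis_complex D S" and v: "v \<in> cc (nak1 j t D) n a"
  shows "dd (nak1 j t D) n a v = bdiff (nak1_basis j t S) n a v"
proof (cases "nonneg a")
  case False
  then show ?thesis by (auto simp: nak1_def pullback_def bdiff_def nak1_basis_def zv_def fun_eq_iff)
next
  case True
  let ?r1 = "psub (ptr t a) (eps j)"
  let ?r2 = "padd (ptr t a) (psc (int (tcomp t j)) (eps j))"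
  note u = cc_nak1_components(1)[OF basis True v] and w = cc_nak1_components(2)[OF basis True v]
  show ?thesis unfolding dd_nak1_components[OF basis True u] basis_complex_dd[OF basis u] basis_complex_dd[OF basis w]
  proof (rule ext)
    fix l
    show "pr (bdiff S n ?r1 (fstv v))
             (vsub (bdiff S (n+1) ?r2 (sndv v))
               (if even n then restrict (S n ?r2) (fstv v) else vneg (restrict (S n ?r2) (fstv v)))) l
          = bdiff (nak1_basis j t S) n a v l"
    proof (cases l)
      case Nil then show ?thesis by (simp add: pr_def bdiff_def nak1_basis_def)
    next
      case (Cons b l')
      show ?thesis
      proof (cases b)
        case False
        then show ?thesis using Cons True koszul_sum_False[where n=n and v=v and l=l']
          by (simp add: pr_def bdiff_def nak1_basis_def image_iff fstv_def)
      next
        case b: True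
        then show ?thesis using Cons True koszul_sum_True[where n=n and v=v and l=l']
          by (simp add: pr_def bdiff_def nak1_basis_def image_iff vsub_def restrict_def vneg_def fstv_def sndv_def)
      qed
    qed
  qed
qed

lemma basis_complex_nak1:
  fixes D :: "'k::comm_ring_1 gcx"
  assumes basis: "basis_complex D S"
  shows "basis_complex (nak1 j t D) (nak1_basis j t S)"
  unfolding basis_complex_def
proof (intro conjI allI impI)
  fix n a show "cc (nak1 j t D) n a = {v. \<forall>l. v l \<noteq> 0 \<longrightarrow> l \<in> nak1_basis j t S n a}" using cc_nak1[OF basis] .
next
  fix n a assume "\<not> nonneg a" then show "nak1_basis j t S n a = {}" by (simp add: nak1_basis_def)
next
  fix n b i l m m' assume "nonneg b" "m' \<le> m" "l \<in> nak1_basis j t S n b" "l \<in> nak1_basis j t S n (padd b (psc (int m) (eps i)))"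
  then show "l \<in> nak1_basis j t S n (padd b (psc (int m') (eps i)))" using nak1_basis_convex[OF basis] by blast
next
  fix i n a v assume "v \<in> cc (nak1 j t D) n a"
  then show "mul (nak1 j t D) i n a v = restrict (nak1_basis j t S n (padd a (eps i))) v" using mul_nak1[OF basis] by blast
next
  fix n a v assume "v \<in> cc (nak1 j t D) n a"
  then show "dd (nak1 j t D) n a v = bdiff (nak1_basis j t S) n a v" using dd_nak1[OF basis] by blast
qed

lemma basis_complex_funpow:
  fixes D :: "'k::comm_ring_1 gcx"
  assumes basis: "basis_complex D S"
  shows "basis_complex (((nak1 j t)^^m) D) (((nak1_basis j t)^^m) S)"
  by (induction m) (auto simp: basis basis_complex_nak1)

section \<open>The word basis of S/I\<close>

lemma in_supp_down:
  assumes I: "monomial_ideal I" and b: "in_supp I b" and a: "nonneg a" and ab: "ple a b"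
  shows "in_supp I a"
proof -
  have "(nat (fst a), nat (snd a)) \<notin> I"
  proof
    assume "(nat (fst a), nat (snd a)) \<in> I"
    moreover have "nle (nat (fst a), nat (snd a)) (nat (fst b), nat (snd b))"
      using ab a by (auto simp: nle_def ple_def nonneg_def)
    ultimately have "(nat (fst b), nat (snd b)) \<in> I" using I unfolding monomial_ideal_def by blast
    then show False using b by (simp add: in_supp_def)
  qed
  then show ?thesis using a by (simp add: in_supp_def)
qed

lemma ptr_le: "nonneg a \<Longrightarrow> nonneg (ptr t a) \<and> ple (ptr t a) a"
  by (auto simp: ptr_def nonneg_def ple_def)

lemma min_gen_below:
  assumes xI: "x \<in> I"
  shows "\<exists>m\<in>min_gens I. nle m x"
proof -
  let ?P = "\<lambda>m. m \<in> I \<and> nle m x"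
  obtain m where m: "?P m" and mmin: "\<And>y. ?P y \<Longrightarrow> fst m + snd m \<le> fst y + snd y"
    using ex_has_least_nat[of ?P x "\<lambda>m. fst m + snd m"] xI by (auto simp: nle_def)
  have "m \<in> min_gens I"
    unfolding min_gens_def
  proof (intro CollectI conjI ballI impI)
    show "m \<in> I" using m by blast
    fix b assume bI: "b \<in> I" and bm: "nle b m"
    have "nle b x" using bm m by (auto simp: nle_def)
    then have "fst m + snd m \<le> fst b + snd b" using mmin bI by blast
    then show "b = m" using bm by (auto simp: nle_def prod_eq_iff)
  qed
  then show ?thesis using m by blast
qed

lemma in_supp_ptr:
  assumes I: "monomial_ideal I" and P: "pos_t_determined t I" and a: "nonneg a"
  shows "in_supp I (ptr t a) = in_supp I a"
proof
  assume "in_supp I a" then show "in_supp I (ptr t a)" using in_supp_down[OF I] ptr_le[OF a] by blast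
next
  assume h: "in_supp I (ptr t a)"
  show "in_supp I a"
  proof (rule ccontr)
    assume "\<not> in_supp I a"
    then have "(nat (fst a), nat (snd a)) \<in> I" using a by (simp add: in_supp_def)
    then obtain m where mg: "m \<in> min_gens I" and m: "nle m (nat (fst a), nat (snd a))"
      using min_gen_below by blast
    have "nle m t" using mg P by (simp add: pos_t_determined_def)
    then have "nle m (nat (fst (ptr t a)), nat (snd (ptr t a)))" using m a
      by (auto simp: nle_def ptr_def nonneg_def)
    moreover have "m \<in> I" using mg by (simp add: min_gens_def)
    ultimately have "(nat (fst (ptr t a)), nat (snd (ptr t a))) \<in> I" using I unfolding monomial_ideal_def by blast
    then show False using h by (simp add: in_supp_def)
  qed
qed

definition quot_basis :: "(nat \<times> nat) set \<Rightarrow> int \<Rightarrow> int \<times> int \<Rightarrow> bool list set" where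
  "quot_basis I n a = (if n = 0 \<and> in_supp I a then {[]} else {})"

lemma range_constv: "range constv = {v :: 'k::zero vec. supported {[]} v}"
proof (intro set_eqI iffI)
  fix v :: "'k vec" assume "v \<in> range constv"
  then show "v \<in> {v. supported {[]} v}" by (auto simp: constv_def split: if_splits)
next
  fix v :: "'k vec" assume "v \<in> {v. supported {[]} v}"
  then have "v = constv (v [])" by (auto simp: constv_def fun_eq_iff)
  then show "v \<in> range constv" by blast
qed

lemma basis_complex_quot:
  fixes I :: "(nat \<times> nat) set"
  assumes I: "monomial_ideal I"
  shows "basis_complex (quot I :: 'k::comm_ring_1 gcx) (quot_basis I)"
  unfolding basis_complex_def
proof (intro conjI allI impI)
  fix n a
  show "cc (quot I :: 'k gcx) n a = {v. \<forall>l. v l \<noteq> 0 \<longrightarrow> l \<in> quot_basis I n a}"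
  proof (cases "n = 0 \<and> in_supp I a")
    case True
    then show ?thesis using range_constv by (simp add: quot_def quot_basis_def)
  next
    case False
    then show ?thesis by (auto simp: quot_def quot_basis_def zv_def fun_eq_iff)
  qed
next
  fix n a assume "\<not> nonneg a" then show "quot_basis I n a = {}" by (simp add: quot_basis_def in_supp_def)
next
  fix n b i l m m' assume nb: "nonneg b" and mm: "m' \<le> m" and l1: "l \<in> quot_basis I n b"
    and l2: "l \<in> quot_basis I n (padd b (psc (int m) (eps i)))"
  have "in_supp I (padd b (psc (int m') (eps i)))"
    using in_supp_down[OF I, of "padd b (psc (int m) (eps i))" "padd b (psc (int m') (eps i))"] l2 nb mm
    by (auto simp: quot_basis_def nonneg_def padd_def psc_def eps_def ple_def split: if_splits)
  then show "l \<in> quot_basis I n (padd b (psc (int m') (eps i)))" using l1 l2 by (auto simp: quot_basis_def split: if_splits)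
next
  fix i n a and v :: "'k vec" assume v: "v \<in> cc (quot I) n a"
  show "mul (quot I) i n a v = restrict (quot_basis I n (padd a (eps i))) v"
    using v by (auto simp: quot_def quot_basis_def restrict_def zv_def constv_def fun_eq_iff)
next
  fix n a and v :: "'k vec" assume v: "v \<in> cc (quot I) n a"
  show "dd (quot I) n a v = bdiff (quot_basis I) n a v"
    by (auto simp: quot_def quot_basis_def bdiff_def zv_def fun_eq_iff)
qed

section \<open>The words of N^k_t(S/I)\<close>

text \<open>A block of letters is read as a walk: a letter False steps down by one (and must stay
  nonnegative), a letter True jumps to the top value T.\<close>
fun admissible :: "int \<Rightarrow> int \<Rightarrow> bool list \<Rightarrow> bool" where
  "admissible T c [] = True"
| "admissible T c (b # l) = (if b then admissible T T l else (1 \<le> c \<and> admissible T (c-1) l))"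

fun final_coord :: "int \<Rightarrow> int \<Rightarrow> bool list \<Rightarrow> int" where
  "final_coord T c [] = c"
| "final_coord T c (b # l) = (if b then final_coord T T l else final_coord T (c-1) l)"

lemma ntrue_simps[simp]: "ntrue [] = 0" "ntrue (True # l) = Suc (ntrue l)" "ntrue (False # l) = ntrue l"
  "ntrue (xs @ ys) = ntrue xs + ntrue ys"
  by (auto simp: ntrue_def)

lemma nak1_basis_y_step:
  "l \<in> nak1_basis 2 t X n a \<longleftrightarrow> nonneg a \<and>
     ((\<exists>l'. l = False # l' \<and> l' \<in> X n (min (fst a) (int (fst t)), min (snd a) (int (snd t)) - 1))
      \<or> (\<exists>l'. l = True # l' \<and> l' \<in> X (n+1) (min (fst a) (int (fst t)), min (snd a) (int (snd t)) + int (snd t))))"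
  by (auto simp: nak1_basis_def ptr_def psub_def padd_def psc_def eps_def tcomp_def)

lemma nak1_basis_x_step:
  "l \<in> nak1_basis 1 t X n a \<longleftrightarrow> nonneg a \<and>
     ((\<exists>l'. l = False # l' \<and> l' \<in> X n (min (fst a) (int (fst t)) - 1, min (snd a) (int (snd t))))
      \<or> (\<exists>l'. l = True # l' \<and> l' \<in> X (n+1) (min (fst a) (int (fst t)) + int (fst t), min (snd a) (int (snd t)))))"
  by (auto simp: nak1_basis_def ptr_def psub_def padd_def psc_def eps_def tcomp_def)

lemma nak2_basis_char:
  assumes I: "monomial_ideal I" and P: "pos_t_determined t I"
  shows "l \<in> ((nak1_basis 2 t)^^m) (quot_basis I) n a \<longleftrightarrow> nonneg a \<and> length l = m \<and> n + int (ntrue l) = 0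
     \<and> admissible (int (snd t)) (min (snd a) (int (snd t))) l
     \<and> in_supp I (min (fst a) (int (fst t)), final_coord (int (snd t)) (min (snd a) (int (snd t))) l)"
proof (induction m arbitrary: l n a)
  case 0
  have "nonneg a \<Longrightarrow> in_supp I (min (fst a) (int (fst t)), min (snd a) (int (snd t))) = in_supp I a"
    using in_supp_ptr[OF I P, of a] by (simp add: ptr_def)
  then show ?case by (auto simp: quot_basis_def in_supp_def)
next
  case (Suc m)
  let ?X = "((nak1_basis 2 t)^^m) (quot_basis I)"
  let ?d = "min (fst a) (int (fst t))" and ?c = "min (snd a) (int (snd t))" and ?T = "int (snd t)"
  have ns: "l \<in> ((nak1_basis 2 t)^^Suc m) (quot_basis I) n a \<longleftrightarrow> nonneg a \<and> ((\<exists>l'. l = False#l' \<and> l' \<in> ?X n (?d, ?c - 1))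
        \<or> (\<exists>l'. l = True#l' \<and> l' \<in> ?X (n+1) (?d, ?c + ?T)))"
    unfolding funpow.simps(2) o_apply by (rule nak1_basis_y_step)
  show ?case
  proof (cases l)
    case Nil then show ?thesis unfolding ns by simp
  next
    case (Cons b l')
    show ?thesis
    proof (cases b)
      case False
      have "?d \<le> int (fst t)" "?c \<le> ?T" by auto
      then show ?thesis unfolding ns Suc.IH using Cons False
        by (auto simp: nonneg_def min_absorb1)
    next
      case True
      then show ?thesis unfolding ns Suc.IH using Cons
        by (auto simp: nonneg_def min_absorb1 algebra_simps)
    qed
  qed
qed

lemma final_coord_le: "c \<le> T \<Longrightarrow> final_coord T c l \<le> T"
  by (induction l arbitrary: c) auto

lemma ex_prefix_Cons:
  "(\<exists>l1 l2. x # l = l1 @ l2 \<and> length l1 = Suc m \<and> P l1 l2)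
     \<longleftrightarrow> (\<exists>l1 l2. l = l1 @ l2 \<and> length l1 = m \<and> P (x # l1) l2)"
proof
  assume "\<exists>l1 l2. x # l = l1 @ l2 \<and> length l1 = Suc m \<and> P l1 l2"
  then obtain l1 l2 where l: "x # l = l1 @ l2" and len: "length l1 = Suc m" and P: "P l1 l2" by blast
  then obtain l1' where "l1 = x # l1'" "l = l1' @ l2" "length l1' = m" by (cases l1) auto
  then show "\<exists>l1 l2. l = l1 @ l2 \<and> length l1 = m \<and> P (x # l1) l2" using P by blast
next
  assume "\<exists>l1 l2. l = l1 @ l2 \<and> length l1 = m \<and> P (x # l1) l2"
  then show "\<exists>l1 l2. x # l = l1 @ l2 \<and> length l1 = Suc m \<and> P l1 l2"
    by (metis append_Cons length_Cons)
qed

lemma nak12_basis_char: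
  assumes I: "monomial_ideal I" and P: "pos_t_determined t I"
  shows "l \<in> ((nak1_basis 1 t)^^m) (((nak1_basis 2 t)^^m2) (quot_basis I)) n a \<longleftrightarrow> nonneg a \<and>
     (\<exists>l1 l2. l = l1 @ l2 \<and> length l1 = m \<and> admissible (int (fst t)) (min (fst a) (int (fst t))) l1
        \<and> l2 \<in> ((nak1_basis 2 t)^^m2) (quot_basis I) (n + int (ntrue l1)) (final_coord (int (fst t)) (min (fst a) (int (fst t))) l1, min (snd a) (int (snd t))))"
proof (induction m arbitrary: l n a)
  case 0
  show ?case unfolding funpow_0 nak2_basis_char[OF I P] by (auto simp: nonneg_def)
next
  case (Suc m)
  let ?X = "((nak1_basis 1 t)^^m) (((nak1_basis 2 t)^^m2) (quot_basis I))"
  let ?d = "min (fst a) (int (fst t))" and ?c = "min (snd a) (int (snd t))" and ?T = "int (fst t)"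
  have ns: "l \<in> ((nak1_basis 1 t)^^Suc m) (((nak1_basis 2 t)^^m2) (quot_basis I)) n a \<longleftrightarrow> nonneg a \<and> ((\<exists>l'. l = False#l' \<and> l' \<in> ?X n (?d - 1, ?c))
        \<or> (\<exists>l'. l = True#l' \<and> l' \<in> ?X (n+1) (?d + ?T, ?c)))"
    unfolding funpow.simps(2) o_apply by (rule nak1_basis_x_step)
  show ?case
  proof (cases l)
    case Nil then show ?thesis unfolding ns by simp
  next
    case (Cons x l')
    show ?thesis
    proof (cases x)
      case False
      then show ?thesis unfolding ns unfolding Suc.IH Cons ex_prefix_Cons
        by (auto simp: nonneg_def min_absorb1; blast)
    next
      case True
      then show ?thesis unfolding ns unfolding Suc.IH Cons ex_prefix_Cons
        by (auto simp: nonneg_def min_absorb1 algebra_simps; blast)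
    qed
  qed
qed

definition nak_basis :: "nat \<times> nat \<Rightarrow> nat \<times> nat \<Rightarrow> (nat \<times> nat) set \<Rightarrow> int \<Rightarrow> int \<times> int \<Rightarrow> bool list set" where
  "nak_basis t k I = ((nak1_basis 1 t)^^fst k) (((nak1_basis 2 t)^^snd k) (quot_basis I))"

lemma nak_basis_char:
  assumes I: "monomial_ideal I" and P: "pos_t_determined t I"
  shows "l \<in> nak_basis t k I n a \<longleftrightarrow> nonneg a \<and>
     (\<exists>l1 l2. l = l1 @ l2 \<and> length l1 = fst k \<and> length l2 = snd k
        \<and> admissible (int (fst t)) (min (fst a) (int (fst t))) l1
        \<and> admissible (int (snd t)) (min (snd a) (int (snd t))) l2
        \<and> n + int (ntrue l1) + int (ntrue l2) = 0
        \<and> in_supp I (final_coord (int (fst t)) (min (fst a) (int (fst t))) l1, final_coord (int (snd t)) (min (snd a) (int (snd t))) l2))"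
    (is "_ \<longleftrightarrow> nonneg a \<and> (\<exists>l1 l2. ?R l1 l2)")
proof -
  let ?e = "\<lambda>l1. final_coord (int (fst t)) (min (fst a) (int (fst t))) l1"
  let ?c = "min (snd a) (int (snd t))"
  have e: "min (?e l1) (int (fst t)) = ?e l1" for l1
    using final_coord_le[of "min (fst a) (int (fst t))" "int (fst t)" l1] by simp
  have c: "min ?c (int (snd t)) = ?c" by simp
  have nn: "nonneg (x, y) \<longleftrightarrow> 0 \<le> x \<and> 0 \<le> y" for x y by (simp add: nonneg_def)
  have isn: "in_supp I (x, y) \<Longrightarrow> 0 \<le> x" for x y by (simp add: in_supp_def nonneg_def)
  have c2: "nonneg a \<Longrightarrow> 0 \<le> ?c" by (simp add: nonneg_def)
  have eq: "l \<in> nak_basis t k I n a \<longleftrightarrow> nonneg a \<and> (\<exists>l1 l2. l = l1 @ l2 \<and> length l1 = fst k \<and> admissible (int (fst t)) (min (fst a) (int (fst t))) l1 \<and>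
      ((0 \<le> ?e l1 \<and> 0 \<le> ?c) \<and> length l2 = snd k \<and> n + int (ntrue l1) + int (ntrue l2) = 0 \<and>
        admissible (int (snd t)) ?c l2 \<and> in_supp I (?e l1, final_coord (int (snd t)) ?c l2)))"
    unfolding nak_basis_def nak12_basis_char[OF I P] nak2_basis_char[OF I P] fst_conv snd_conv e c nn ..
  show ?thesis
  proof
    assume "l \<in> nak_basis t k I n a"
    then obtain l1 l2 where "nonneg a" "l = l1 @ l2 \<and> length l1 = fst k \<and> admissible (int (fst t)) (min (fst a) (int (fst t))) l1 \<and>
      ((0 \<le> ?e l1 \<and> 0 \<le> ?c) \<and> length l2 = snd k \<and> n + int (ntrue l1) + int (ntrue l2) = 0 \<and>
        admissible (int (snd t)) ?c l2 \<and> in_supp I (?e l1, final_coord (int (snd t)) ?c l2))" unfolding eq by blast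
    then show "nonneg a \<and> (\<exists>l1 l2. ?R l1 l2)" by blast
  next
    assume "nonneg a \<and> (\<exists>l1 l2. ?R l1 l2)"
    then obtain l1 l2 where na: "nonneg a" and R: "?R l1 l2" by blast
    have "0 \<le> ?e l1" using R isn by blast
    then show "l \<in> nak_basis t k I n a" unfolding eq using na R c2[OF na] by blast
  qed
qed

lemma ntrue_Suc_split: "ntrue l = Suc n \<Longrightarrow> \<exists>A C. l = A @ True # C \<and> True \<notin> set A \<and> ntrue C = n"
proof (induction l)
  case Nil then show ?case by simp
next
  case (Cons x l)
  show ?case
  proof (cases x)
    case True
    then show ?thesis using Cons.prems by (intro exI[of _ "[]"] exI[of _ l]) auto
  next
    case False
    then obtain A C where "l = A @ True # C" "True \<notin> set A" "ntrue C = n" using Cons by auto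
    then show ?thesis using False by (intro exI[of _ "False # A"] exI[of _ C]) auto
  qed
qed

lemma ntrue_zero_iff: "ntrue l = 0 \<longleftrightarrow> True \<notin> set l"
  by (induction l) (auto simp: ntrue_def)

lemma ntrue_one: "ntrue l = 1 \<Longrightarrow> \<exists>A C. l = A @ True # C \<and> True \<notin> set A \<and> True \<notin> set C"
  using ntrue_Suc_split[of l 0] ntrue_zero_iff by auto

lemma ntrue_two: "ntrue l = 2 \<Longrightarrow> \<exists>A B C. l = A @ True # B @ True # C \<and> True \<notin> set A \<and> True \<notin> set B \<and> True \<notin> set C"
proof -
  assume "ntrue l = 2"
  then obtain A C where "l = A @ True # C" "True \<notin> set A" "ntrue C = 1" using ntrue_Suc_split[of l 1] by auto
  moreover obtain B E where "C = B @ True # E" "True \<notin> set B" "True \<notin> set E" using ntrue_one[OF \<open>ntrue C = 1\<close>] by blast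
  ultimately show ?thesis by blast
qed

lemma no_true_replicate: "True \<notin> set A \<Longrightarrow> A = replicate (length A) False"
  by (induction A) auto

lemma admissible_false_prefix: "True \<notin> set A \<Longrightarrow> admissible T c (A @ l) = ((A \<noteq> [] \<longrightarrow> int (length A) \<le> c) \<and> admissible T (c - int (length A)) l)"
proof (induction A arbitrary: c)
  case Nil then show ?case by simp
next
  case (Cons x A)
  then have x: "x = False" "True \<notin> set A" by auto
  show ?case using Cons.IH[OF x(2), of "c - 1"] x by (auto simp: algebra_simps)
qed

lemma final_coord_false_prefix: "True \<notin> set A \<Longrightarrow> final_coord T c (A @ l) = final_coord T (c - int (length A)) l"
proof (induction A arbitrary: c)
  case Nil then show ?case by simp
next
  case (Cons x A)
  then have x: "x = False" "True \<notin> set A" by auto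
  show ?case using Cons.IH[OF x(2), of "c - 1"] x by (auto simp: algebra_simps)
qed

lemma admissible_all_false: "True \<notin> set A \<Longrightarrow> admissible T c A = (A \<noteq> [] \<longrightarrow> int (length A) \<le> c)"
  using admissible_false_prefix[of A T c "[]"] by simp
lemma final_coord_all_false: "True \<notin> set A \<Longrightarrow> final_coord T c A = c - int (length A)"
  using final_coord_false_prefix[of A T c "[]"] by simp

lemma true_pos_false_prefix: "True \<notin> set A \<Longrightarrow> true_pos (A @ l) = (\<lambda>j. length A + j) ` true_pos l"
proof (induction A)
  case Nil then show ?case by simp
next
  case (Cons x A)
  then have x: "x = False" by auto
  show ?case using Cons x by (auto simp: image_image)
qed

lemma true_pos_all_false: "True \<notin> set A \<Longrightarrow> true_pos A = {}"
  using true_pos_false_prefix[of A "[]"] by simp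

lemma dsign_false_prefix: "True \<notin> set A \<Longrightarrow> dsign n (A @ l) (length A + j) = dsign n l j"
proof -
  assume "True \<notin> set A"
  then have "ntrue A = 0" using ntrue_zero_iff by blast
  then show ?thesis by (simp add: dsign_def)
qed

lemma true_pos_one: "True \<notin> set A \<Longrightarrow> True \<notin> set C \<Longrightarrow> true_pos (A @ True # C) = {length A}"
  by (simp add: true_pos_false_prefix true_pos_all_false)

lemma true_pos_two: "True \<notin> set A \<Longrightarrow> True \<notin> set B \<Longrightarrow> True \<notin> set C \<Longrightarrow>
    true_pos (A @ True # B @ True # C) = {length A, length A + Suc (length B)}"
  by (simp add: true_pos_false_prefix true_pos_all_false)

lemma update_first: "(A @ x # C)[length A := y] = A @ y # C" by (simp add: list_update_append)
lemma update_second: "(A @ x # B @ y # C)[length A + Suc (length B) := z] = A @ x # B @ z # C"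
  by (simp add: list_update_append)

lemma dsign_first: "True \<notin> set A \<Longrightarrow> dsign n (A @ True # C) (length A) = (if even n then -1 else 1)"
  using dsign_false_prefix[of A n "True # C" 0] by simp
lemma dsign_second: "True \<notin> set A \<Longrightarrow> True \<notin> set B \<Longrightarrow>
   dsign n (A @ True # B @ True # C) (length A + Suc (length B)) = (if even (n+1) then -1 else 1)"
proof -
  assume a: "True \<notin> set A" and b: "True \<notin> set B"
  have "dsign n (A @ True # B @ True # C) (length A + Suc (length B)) = dsign n (True # B @ True # C) (Suc (length B))"
    using dsign_false_prefix[OF a] by blast
  also have "\<dots> = dsign (n+1) (B @ True # C) (length B)" by simp
  also have "\<dots> = (if even (n+1) then -1 else 1)" using dsign_first[OF b] .
  finally show ?thesis .
qed

lemma ntrue_replicate[simp]: "ntrue (replicate n False) = 0"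
  using ntrue_zero_iff by simp

lemma admissible_replicate: "admissible T c (replicate n False) \<longleftrightarrow> (n \<noteq> 0 \<longrightarrow> int n \<le> c)"
  by (simp add: admissible_all_false)

lemma final_coord_replicate: "final_coord T c (replicate n False) = c - int n"
  by (simp add: final_coord_all_false)

lemma final_coord_after_true:
  "True \<notin> set A \<Longrightarrow> True \<notin> set C \<Longrightarrow> final_coord T c (A @ True # C) = T - int (length C)"
  by (simp add: final_coord_false_prefix final_coord_all_false)

lemma drop_one_true:
  assumes nA: "True \<notin> set A" and nB: "True \<notin> set B" and nC: "True \<notin> set C"
    and ok: "admissible T m (A @ True # B @ True # C)" and len: "length (A @ True # B @ True # C) = Suc (nat m)"
    and m0: "0 \<le> m" and mT: "m \<le> T"
  shows "admissible T m (A @ False # B @ True # C)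
     \<and> final_coord T m (A @ False # B @ True # C) = final_coord T m (A @ True # B @ True # C)
     \<and> admissible T m (A @ True # B @ False # C)
     \<and> final_coord T m (A @ True # B @ False # C) \<le> final_coord T m (A @ True # B @ True # C)
     \<and> 0 \<le> final_coord T m (A @ True # B @ False # C)"
  using assms by (auto simp: admissible_false_prefix final_coord_false_prefix admissible_all_false final_coord_all_false)

lemma in_supp_nonneg: "in_supp I (u, v) \<Longrightarrow> 0 \<le> u \<and> 0 \<le> v"
  by (simp add: in_supp_def nonneg_def)

lemma bdiff_zero: "bdiff S n a (zv :: 'k::comm_ring_1 vec) = zv"
  by (simp add: bdiff_def zv_def fun_eq_iff)

lemma zero_is_boundary: "\<exists>b. supported (S n a) b \<and> bdiff S n a b = (zv :: 'k::comm_ring_1 vec)"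
proof (intro exI[of _ zv] conjI)
  show "supported (S n a) (zv :: 'k vec)" by (simp add: zv_def)
  show "bdiff S n a zv = (zv :: 'k vec)" by (rule bdiff_zero)
qed

lemma bdiff_two_trues:
  fixes z :: "'k::comm_ring_1 vec"
  assumes l: "A @ True # B @ True # C \<in> S (-2) a"
    and nA: "True \<notin> set A" and nB: "True \<notin> set B" and nC: "True \<notin> set C"
  shows "bdiff S (-1) a z (A @ True # B @ True # C) = z (A @ False # B @ True # C) - z (A @ True # B @ False # C)"
proof -
  let ?l = "A @ True # B @ True # C"
  have "bdiff S (-1) a z ?l = dsign (-1) ?l (length A) * z (?l[length A := False])
      + dsign (-1) ?l (length A + Suc (length B)) * z (?l[length A + Suc (length B) := False])"
    using l by (simp add: bdiff_def true_pos_two[OF nA nB nC])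
  moreover have "?l[length A := False] = A @ False # B @ True # C"
    using update_first[of A True "B @ True # C" False] by simp
  moreover have "?l[length A + Suc (length B) := False] = A @ True # B @ False # C"
    using update_second by simp
  moreover have "dsign (-1) ?l (length A) = (1::'k)"
    using dsign_first[OF nA, of "-1" "B @ True # C"] by simp
  moreover have "dsign (-1) ?l (length A + Suc (length B)) = (-1::'k)"
    using dsign_second[OF nA nB, of "-1" C] by simp
  ultimately show ?thesis by (simp add: algebra_simps)
qed

lemma cycle_swap_true:
  fixes z :: "'k::comm_ring_1 vec"
  assumes cyc: "bdiff S (-1) a z = zv" and l: "A @ True # B @ True # C \<in> S (-2) a"
    and nA: "True \<notin> set A" and nB: "True \<notin> set B" and nC: "True \<notin> set C"
  shows "z (A @ False # B @ True # C) = z (A @ True # B @ False # C)"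
proof -
  have "bdiff S (-1) a z (A @ True # B @ True # C) = 0" using cyc by (simp add: zv_def)
  then show ?thesis using bdiff_two_trues[where S=S and a=a and A=A and B=B and C=C and z=z, OF l nA nB nC] by simp
qed

lemma bdiff_single_true:
  fixes b :: "'k::comm_ring_1 vec"
  assumes l: "A @ True # C \<in> S (-1) a" and nA: "True \<notin> set A" and nC: "True \<notin> set C"
  shows "bdiff S 0 a b (A @ True # C) = - b (A @ False # C)"
  using l by (simp add: bdiff_def true_pos_one[OF nA nC] update_first dsign_first[OF nA])

lemma not_boundary:
  fixes z :: "'k::comm_ring_1 vec"
  assumes "S 0 a = {}" and "z l \<noteq> 0"
  shows "\<not> (\<exists>b. supported (S 0 a) b \<and> bdiff S 0 a b = z)"
proof
  assume "\<exists>b. supported (S 0 a) b \<and> bdiff S 0 a b = z"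
  then obtain b where b: "supported (S 0 a) b" and e: "bdiff S 0 a b = z" by blast
  have "b = zv" using b assms(1) by (auto simp: zv_def fun_eq_iff)
  then have "z = zv" using e bdiff_zero by metis
  then show False using assms(2) by (simp add: zv_def)
qed

lemma indicator_nonbounding:
  fixes S :: "int \<Rightarrow> int \<times> int \<Rightarrow> bool list set" and a :: "int \<times> int"
  defines "z \<equiv> \<lambda>l. if l \<in> S (-1) a then 1 else (0::'k::comm_ring_1)"
  assumes S0: "S 0 a = {}" and w: "w \<in> S (-1) a"
    and swap: "\<And>l. l \<in> S (-2) a \<Longrightarrow> \<exists>A B C. l = A @ True # B @ True # C
        \<and> True \<notin> set A \<and> True \<notin> set B \<and> True \<notin> set C
        \<and> A @ False # B @ True # C \<in> S (-1) a \<and> A @ True # B @ False # C \<in> S (-1) a"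
  shows "supported (S (-1) a) z \<and> bdiff S (-1) a z = zv
     \<and> \<not> (\<exists>b. supported (S 0 a) b \<and> bdiff S 0 a b = z)"
proof (intro conjI)
  show "supported (S (-1) a) z" by (simp add: z_def)
  show "bdiff S (-1) a z = zv"
  proof (rule ext)
    fix l
    show "bdiff S (-1) a z l = zv l"
    proof (cases "l \<in> S (-2) a")
      case False then show ?thesis by (simp add: bdiff_def zv_def)
    next
      case True
      then obtain A B C where l: "l = A @ True # B @ True # C"
        and nA: "True \<notin> set A" and nB: "True \<notin> set B" and nC: "True \<notin> set C"
        and m1: "A @ False # B @ True # C \<in> S (-1) a" and m2: "A @ True # B @ False # C \<in> S (-1) a"
        using swap by blast
      have "bdiff S (-1) a z l = z (A @ False # B @ True # C) - z (A @ True # B @ False # C)"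
        using bdiff_two_trues[where S=S and a=a and A=A and B=B and C=C, OF True[unfolded l] nA nB nC] l by simp
      also have "\<dots> = 0" using m1 m2 by (simp add: z_def)
      finally show ?thesis by (simp add: zv_def)
    qed
  qed
  show "\<not> (\<exists>b. supported (S 0 a) b \<and> bdiff S 0 a b = z)"
    using not_boundary[where S=S and a=a, OF S0, of z w] w by (simp add: z_def)
qed

section \<open>Homology of N^k_t(S/I) in homological degree -1\<close>

text \<open>From now on k = (K1+1, K2+1) with K1 \<le> t1 and K2 \<le> t2, and basis denotes the word
  basis of N^k_t(S/I).\<close>
locale nak2_setup =
  fixes I :: "(nat \<times> nat) set" and t :: "nat \<times> nat" and K1 K2 :: nat
  assumes MI: "monomial_ideal I" and PT: "pos_t_determined t I"
    and K1T: "K1 \<le> fst t" and K2T: "K2 \<le> snd t"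
begin

abbreviation T1 :: int where "T1 \<equiv> int (fst t)"
abbreviation T2 :: int where "T2 \<equiv> int (snd t)"
abbreviation basis :: "int \<Rightarrow> int \<times> int \<Rightarrow> bool list set" where
  "basis \<equiv> nak_basis t (Suc K1, Suc K2) I"

lemma basis_split:
  assumes "l \<in> basis n a"
  obtains l1 l2 where "l = l1 @ l2" "length l1 = Suc K1" "nonneg a"
  using assms nak_basis_char[OF MI PT, of l "(Suc K1, Suc K2)" n a] by auto

lemma basis_split_iff:
  assumes na: "nonneg a" and d: "min (fst a) T1 = d" and c: "min (snd a) T2 = c"
    and len1: "length l1 = Suc K1"
  shows "l1 @ l2 \<in> basis n a \<longleftrightarrow> length l2 = Suc K2
     \<and> admissible T1 d l1 \<and> admissible T2 c l2 \<and> n + int (ntrue l1) + int (ntrue l2) = 0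
     \<and> in_supp I (final_coord T1 d l1, final_coord T2 c l2)"
proof -
  have "l1 @ l2 = l1' @ l2' \<longleftrightarrow> l1' = l1 \<and> l2' = l2" if "length l1' = Suc K1" for l1' l2' :: "bool list"
    using append_eq_append_conv[of l1 l1' l2 l2'] len1 that by auto
  then show ?thesis
    using na len1 nak_basis_char[OF MI PT, of "l1 @ l2" "(Suc K1, Suc K2)" n a] d c by auto
qed

lemma basis_ntrue:
  assumes "l \<in> basis n a"
  shows "n + int (ntrue l) = 0"
proof -
  obtain l1 l2 where l: "l = l1 @ l2" and len1: "length l1 = Suc K1" and na: "nonneg a"
    using assms by (rule basis_split)
  then show ?thesis using assms basis_split_iff[OF na refl refl len1] by auto
qed

lemma corner_excludes:
  assumes nc: "\<not> in_supp I (T1 - int K1, T2 - int K2)" and "m1 \<le> K1" "m2 \<le> K2"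
  shows "\<not> in_supp I (T1 - int m1, T2 - int m2)"
  using in_supp_down[OF MI, of "(T1 - int m1, T2 - int m2)" "(T1 - int K1, T2 - int K2)"] nc assms K1T K2T
  by (auto simp: nonneg_def ple_def)

lemma split_trues_excluded:
  assumes nc: "\<not> in_supp I (T1 - int K1, T2 - int K2)"
    and len: "length l1 = Suc K1" "length l2 = Suc K2" and n: "ntrue l1 = 1" "ntrue l2 = 1"
  shows "\<not> in_supp I (final_coord T1 d l1, final_coord T2 c l2)"
proof -
  obtain A1 C1 A2 C2 where "l1 = A1 @ True # C1" "True \<notin> set A1" "True \<notin> set C1"
    "l2 = A2 @ True # C2" "True \<notin> set A2" "True \<notin> set C2" using ntrue_one n by metis
  then show ?thesis
    using corner_excludes[OF nc, of "length C1" "length C2"] len by (simp add: final_coord_after_true)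
qed

subsection \<open>Support inside the box [0, t-k]: no words in degree -1\<close>

lemma no_words_if_support_in_box:
  assumes box: "\<forall>x. in_supp I x \<longrightarrow> fst x \<le> T1 - int (Suc K1) \<and> snd x \<le> T2 - int (Suc K2)"
  shows "basis (-1) a = {}"
proof (rule ccontr)
  assume "basis (-1) a \<noteq> {}"
  then obtain l where l: "l \<in> basis (-1) a" by blast
  then obtain l1 l2 where l12: "l = l1 @ l2" and len1: "length l1 = Suc K1" and na: "nonneg a"
    by (rule basis_split)
  let ?d = "min (fst a) T1" and ?c = "min (snd a) T2"
  have len2: "length l2 = Suc K2" and cn: "-1 + int (ntrue l1) + int (ntrue l2) = 0"
    and su: "in_supp I (final_coord T1 ?d l1, final_coord T2 ?c l2)"
    using l basis_split_iff[OF na refl refl len1] l12 by auto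
  from cn have "ntrue l1 = 1 \<or> ntrue l2 = 1" by linarith
  then show False
  proof
    assume "ntrue l1 = 1"
    then obtain A C where "l1 = A @ True # C" "True \<notin> set A" "True \<notin> set C" using ntrue_one by blast
    then have "final_coord T1 ?d l1 = T1 - int (length C)" and "length C < Suc K1"
      using len1 by (auto simp: final_coord_after_true)
    then show False using box su by fastforce
  next
    assume "ntrue l2 = 1"
    then obtain A C where "l2 = A @ True # C" "True \<notin> set A" "True \<notin> set C" using ntrue_one by blast
    then have "final_coord T2 ?c l2 = T2 - int (length C)" and "length C < Suc K2"
      using len2 by (auto simp: final_coord_after_true)
    then show False using box su by fastforce
  qed
qed

subsection \<open>Corner in the support: every 1-cycle is a boundary\<close>

definition lead1 :: "bool list" where
  "lead1 = (True # replicate K1 False) @ replicate (Suc K2) False"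

definition lead2 :: "bool list" where
  "lead2 = replicate (Suc K1) False @ True # replicate K2 False"

text \<open>A 1-cycle takes the value z lead1 on every word whose letter True is in the first block;
  the letter True is moved to the front using a degree -2 word with two letters True.\<close>
lemma cycle_first_block:
  fixes z :: "'k::comm_ring_1 vec"
  assumes cyc: "bdiff basis (-1) a z = zv" and l: "l1 @ l2 \<in> basis (-1) a"
    and len1: "length l1 = Suc K1" and n1: "ntrue l1 = 1"
  shows "z (l1 @ l2) = z lead1"
proof -
  obtain na: "nonneg a" using l by (rule basis_split)
  define d where "d = min (fst a) T1"
  have d0: "0 \<le> d" "d \<le> T1" using na by (auto simp: d_def nonneg_def)
  note words = basis_split_iff[OF na d_def[symmetric] refl]
  have len2: "length l2 = Suc K2" and ok1: "admissible T1 d l1"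
    and ok2: "admissible T2 (min (snd a) T2) l2" and n2: "ntrue l2 = 0"
    and su: "in_supp I (final_coord T1 d l1, final_coord T2 (min (snd a) T2) l2)"
    using l words[OF len1] n1 by auto
  obtain A C where l1: "l1 = A @ True # C" and nA: "True \<notin> set A" and nC: "True \<notin> set C"
    using ntrue_one[OF n1] by blast
  have nl2: "True \<notin> set l2" using n2 ntrue_zero_iff by blast
  have l2r: "l2 = replicate (Suc K2) False" using no_true_replicate[OF nl2] len2 by simp
  show ?thesis
  proof (cases A)
    case Nil
    then have "C = replicate K1 False" using no_true_replicate[OF nC] len1 l1 by simp
    then show ?thesis using l1 l2r Nil by (simp add: lead1_def)
  next
    case (Cons x A')
    then have x: "x = False" and nA': "True \<notin> set A'" using nA by auto
    have len': "length (True # A' @ True # C) = Suc K1" using len1 l1 Cons by simp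
    have "ntrue A' = 0" "ntrue C = 0" using nA' nC ntrue_zero_iff by blast+
    then have "(True # A' @ True # C) @ l2 \<in> basis (-2) a"
      unfolding words[OF len'] using len2 ok1 ok2 su l1 Cons x nA' n2 d0
      by (auto simp: admissible_false_prefix final_coord_false_prefix)
    then have "z (False # A' @ True # C @ l2) = z (True # A' @ False # C @ l2)"
      using cycle_swap_true[OF cyc, of "[]" A' "C @ l2"] nA' nC nl2 by simp
    moreover have "A' @ False # C = replicate K1 False"
    proof -
      have "length (A' @ False # C) = K1" using len1 l1 Cons by simp
      moreover have "True \<notin> set (A' @ False # C)" using nA' nC by simp
      ultimately show ?thesis using no_true_replicate by metis
    qed
    then have "True # A' @ False # C @ l2 = lead1"
      unfolding lead1_def l2r by (metis append.assoc append_Cons)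
    ultimately show ?thesis using l1 Cons x by simp
  qed
qed

lemma cycle_second_block:
  fixes z :: "'k::comm_ring_1 vec"
  assumes cyc: "bdiff basis (-1) a z = zv" and l: "l1 @ l2 \<in> basis (-1) a"
    and len1: "length l1 = Suc K1" and n2: "ntrue l2 = 1"
  shows "z (l1 @ l2) = z lead2"
proof -
  obtain na: "nonneg a" using l by (rule basis_split)
  define c where "c = min (snd a) T2"
  have c0: "0 \<le> c" "c \<le> T2" using na by (auto simp: c_def nonneg_def)
  note words = basis_split_iff[OF na refl c_def[symmetric]]
  have len2: "length l2 = Suc K2" and ok1: "admissible T1 (min (fst a) T1) l1"
    and ok2: "admissible T2 c l2" and n1: "ntrue l1 = 0"
    and su: "in_supp I (final_coord T1 (min (fst a) T1) l1, final_coord T2 c l2)"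
    using l words[OF len1] n2 by auto
  obtain A C where l2: "l2 = A @ True # C" and nA: "True \<notin> set A" and nC: "True \<notin> set C"
    using ntrue_one[OF n2] by blast
  have nl1: "True \<notin> set l1" using n1 ntrue_zero_iff by blast
  have l1r: "l1 = replicate (Suc K1) False" using no_true_replicate[OF nl1] len1 by simp
  show ?thesis
  proof (cases A)
    case Nil
    then have "C = replicate K2 False" using no_true_replicate[OF nC] len2 l2 by simp
    then show ?thesis using l2 l1r Nil by (simp add: lead2_def)
  next
    case (Cons x A')
    then have x: "x = False" and nA': "True \<notin> set A'" using nA by auto
    have "ntrue A' = 0" "ntrue C = 0" using nA' nC ntrue_zero_iff by blast+
    then have "l1 @ True # A' @ True # C \<in> basis (-2) a"
      unfolding words[OF len1] using len2 ok1 ok2 su l2 Cons x nA' n1 c0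
      by (auto simp: admissible_false_prefix final_coord_false_prefix)
    then have "z (l1 @ False # A' @ True # C) = z (l1 @ True # A' @ False # C)"
      using cycle_swap_true[OF cyc, of l1 A' C] nl1 nA' nC by simp
    moreover have "A' @ False # C = replicate K2 False"
    proof -
      have "length (A' @ False # C) = K2" using len2 l2 Cons by simp
      moreover have "True \<notin> set (A' @ False # C)" using nA' nC by simp
      ultimately show ?thesis using no_true_replicate by metis
    qed
    ultimately show ?thesis using l2 Cons x l1r by (simp add: lead2_def)
  qed
qed

text \<open>This is the only place where the corner t+1-k must lie in the support.\<close>
lemma cycle_leads_equal:
  fixes z :: "'k::comm_ring_1 vec"
  assumes corner: "in_supp I (T1 - int K1, T2 - int K2)" and na: "nonneg a"
    and cyc: "bdiff basis (-1) a z = zv"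
  shows "z lead2 = z lead1"
proof -
  have len: "length (True # replicate K1 False) = Suc K1" by simp
  have "(True # replicate K1 False) @ True # replicate K2 False \<in> basis (-2) a"
    unfolding basis_split_iff[OF na refl refl len] using corner K1T K2T
    by (simp add: admissible_all_false final_coord_all_false)
  then show ?thesis
    using cycle_swap_true[OF cyc, of "[]" "replicate K1 False" "replicate K2 False"]
    by (simp add: lead1_def lead2_def)
qed

lemma cycle_constant:
  fixes z :: "'k::comm_ring_1 vec"
  assumes corner: "in_supp I (T1 - int K1, T2 - int K2)" and cyc: "bdiff basis (-1) a z = zv"
    and l: "l \<in> basis (-1) a"
  shows "z l = z lead1"
proof -
  obtain l1 l2 where l12: "l = l1 @ l2" and len1: "length l1 = Suc K1" and na: "nonneg a"
    using l by (rule basis_split)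
  have "-1 + int (ntrue l1) + int (ntrue l2) = 0"
    using l l12 basis_split_iff[OF na refl refl len1] by auto
  then consider "ntrue l1 = 1" | "ntrue l2 = 1" by linarith
  then show ?thesis
  proof cases
    case 1 then show ?thesis using cycle_first_block[OF cyc l[unfolded l12] len1] l12 by simp
  next
    case 2 then show ?thesis
      using cycle_second_block[OF cyc l[unfolded l12] len1] cycle_leads_equal[OF corner na cyc] l12
      by simp
  qed
qed

lemma all_false_word_in_basis:
  assumes lead1: "lead1 \<in> basis (-1) a" and lead2: "lead2 \<in> basis (-1) a"
  shows "replicate (Suc K1) False @ replicate (Suc K2) False \<in> basis 0 a"
proof -
  obtain na: "nonneg a" using lead1 by (rule basis_split)
  define d where "d = min (fst a) T1"
  define c where "c = min (snd a) T2"
  have c0: "c \<le> T2" using na by (auto simp: c_def nonneg_def)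
  note words = basis_split_iff[OF na d_def[symmetric] c_def[symmetric]]
  have len: "length (True # replicate K1 False) = Suc K1" by simp
  have "admissible T2 c (replicate (Suc K2) False)"
    using lead1[unfolded lead1_def words[OF len]] by blast
  then have cK: "int (Suc K2) \<le> c" unfolding admissible_replicate by simp
  have "admissible T1 d (replicate (Suc K1) False)"
    and "in_supp I (final_coord T1 d (replicate (Suc K1) False), final_coord T2 c (True # replicate K2 False))"
    using lead2[unfolded lead2_def words[OF length_replicate]] by blast+
  then have dK: "int (Suc K1) \<le> d" and su: "in_supp I (d - int (Suc K1), T2 - int K2)"
    unfolding admissible_replicate final_coord_replicate by (simp_all add: final_coord_replicate)
  have "in_supp I (d - int (Suc K1), c - int (Suc K2))"
    using in_supp_down[OF MI su] dK cK c0 by (simp add: nonneg_def ple_def)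
  then show ?thesis
    unfolding words[OF length_replicate] admissible_replicate final_coord_replicate using dK cK by simp
qed

text \<open>A constant 1-cycle bounds: it is the boundary of a multiple of the word without letters True.\<close>
lemma constant_cycle_bounds:
  fixes z :: "'k::comm_ring_1 vec"
  assumes zS: "supported (basis (-1) a) z" and const: "\<And>l. l \<in> basis (-1) a \<Longrightarrow> z l = z lead1"
    and leads: "z lead2 = z lead1"
  shows "\<exists>b. supported (basis 0 a) b \<and> bdiff basis 0 a b = z"
proof (cases "z lead1 = 0")
  case True
  then have "z = zv" using const zS by (auto simp: zv_def fun_eq_iff)
  then show ?thesis using zero_is_boundary by blast
next
  case False
  define e where "e = replicate (Suc K1) False @ replicate (Suc K2) False"
  have "lead1 \<in> basis (-1) a" "lead2 \<in> basis (-1) a" using zS False leads by metis+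
  then have eS: "e \<in> basis 0 a" unfolding e_def by (rule all_false_word_in_basis)
  define b where "b = (\<lambda>l. if l = e then - z lead1 else 0)"
  have "bdiff basis 0 a b l = z l" for l
  proof (cases "l \<in> basis (-1) a")
    case False then show ?thesis using zS by (auto simp: bdiff_def)
  next
    case True
    obtain l1 l2 where l12: "l = l1 @ l2" and len1: "length l1 = Suc K1" and na: "nonneg a"
      using True by (rule basis_split)
    have "l1 @ l2 \<in> basis (-1) a" using True l12 by simp
    then have "length l2 = Suc K2" unfolding basis_split_iff[OF na refl refl len1] by blast
    then have len: "length l = Suc K1 + Suc K2" using l12 len1 by simp
    obtain A C where l: "l = A @ True # C" and nA: "True \<notin> set A" and nC: "True \<notin> set C"
      using ntrue_one basis_ntrue[OF True] by fastforce
    have "A @ False # C = e"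
    proof -
      have "length (A @ False # C) = Suc K1 + Suc K2" using len l by simp
      moreover have "True \<notin> set (A @ False # C)" using nA nC by simp
      ultimately show ?thesis unfolding e_def replicate_add[symmetric] using no_true_replicate by metis
    qed
    then show ?thesis using bdiff_single_true[where S=basis and a=a, OF True[unfolded l] nA nC, of b] const[OF True] l
      by (simp add: b_def)
  qed
  then show ?thesis using eS by (intro exI[of _ b]) (auto simp: b_def)
qed

lemma cycles_bound_if_corner:
  fixes z :: "'k::comm_ring_1 vec"
  assumes corner: "in_supp I (T1 - int K1, T2 - int K2)"
    and zS: "supported (basis (-1) a) z" and cyc: "bdiff basis (-1) a z = zv"
  shows "\<exists>b. supported (basis 0 a) b \<and> bdiff basis 0 a b = z"
proof (cases "nonneg a")
  case False
  then have "l \<notin> basis (-1) a" for l by (auto elim: basis_split)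
  then have "z = zv" using zS by (auto simp: zv_def)
  then show ?thesis using zero_is_boundary by blast
next
  case True
  show ?thesis
    using constant_cycle_bounds[OF zS cycle_constant[OF corner cyc] cycle_leads_equal[OF corner True cyc]] .
qed

subsection \<open>Neither condition: a 1-cycle that is not a boundary\<close>

text \<open>In multidegree (K1, y0+K2+1) every degree -2 word has both letters True in the first block,
  since a letter True in each block would put the point above the corner into the support.\<close>
lemma swap_words_first:
  assumes nc: "\<not> in_supp I (T1 - int K1, T2 - int K2)" and y0: "0 \<le> y0" "y0 + int K2 < T2"
    and l: "l \<in> basis (-2) (int K1, y0 + int (Suc K2))"
  shows "\<exists>A B C. l = A @ True # B @ True # C \<and> True \<notin> set A \<and> True \<notin> set B \<and> True \<notin> set C
     \<and> A @ False # B @ True # C \<in> basis (-1) (int K1, y0 + int (Suc K2))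
     \<and> A @ True # B @ False # C \<in> basis (-1) (int K1, y0 + int (Suc K2))"
proof -
  let ?a = "(int K1, y0 + int (Suc K2))" and ?c = "y0 + int (Suc K2)"
  have na: "nonneg ?a" using y0 by (simp add: nonneg_def)
  have mins: "min (fst ?a) T1 = int K1" "min (snd ?a) T2 = ?c" using K1T y0 by auto
  note words = basis_split_iff[OF na mins]
  obtain l1 l2 where l12: "l = l1 @ l2" and len1: "length l1 = Suc K1"
    using l by (rule basis_split)
  have len2: "length l2 = Suc K2" and ok1: "admissible T1 (int K1) l1" and ok2: "admissible T2 ?c l2"
    and cn: "-2 + int (ntrue l1) + int (ntrue l2) = 0"
    and su: "in_supp I (final_coord T1 (int K1) l1, final_coord T2 ?c l2)"
    using l l12 words[OF len1] by auto
  have "ntrue l1 \<noteq> 0" using ok1 len1 ntrue_zero_iff[of l1] by (auto simp: admissible_all_false)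
  moreover have "\<not> (ntrue l1 = 1 \<and> ntrue l2 = 1)" using split_trues_excluded[OF nc len1 len2] su by blast
  ultimately have "ntrue l1 = 2 \<and> ntrue l2 = 0" using cn by linarith
  then obtain A B C where l1: "l1 = A @ True # B @ True # C" and nA: "True \<notin> set A"
    and nB: "True \<notin> set B" and nC: "True \<notin> set C" and nl2: "True \<notin> set l2"
    using ntrue_two ntrue_zero_iff by metis
  have nt: "ntrue A = 0" "ntrue B = 0" "ntrue C = 0" "ntrue l2 = 0"
    using nA nB nC nl2 ntrue_zero_iff by blast+
  have drop: "admissible T1 (int K1) (A @ False # B @ True # C)
      \<and> final_coord T1 (int K1) (A @ False # B @ True # C) = final_coord T1 (int K1) l1
      \<and> admissible T1 (int K1) (A @ True # B @ False # C)
      \<and> final_coord T1 (int K1) (A @ True # B @ False # C) \<le> final_coord T1 (int K1) l1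
      \<and> 0 \<le> final_coord T1 (int K1) (A @ True # B @ False # C)"
    using drop_one_true[OF nA nB nC, of T1 "int K1"] ok1 len1 K1T l1 by simp
  have "(A @ False # B @ True # C) @ l2 \<in> basis (-1) ?a"
    using words[of "A @ False # B @ True # C"] len1 len2 l1 ok2 drop su nt by auto
  moreover have "(A @ True # B @ False # C) @ l2 \<in> basis (-1) ?a"
    using words[of "A @ True # B @ False # C"] len1 len2 l1 ok2 drop nt
      in_supp_down[OF MI su] in_supp_nonneg[OF su] by (auto simp: nonneg_def ple_def)
  ultimately show ?thesis using l12 l1 nA nB nC nl2 by (intro exI[of _ A] exI[of _ B] exI[of _ "C @ l2"]) auto
qed

lemma swap_words_second:
  assumes nc: "\<not> in_supp I (T1 - int K1, T2 - int K2)" and x0: "0 \<le> x0" "x0 + int K1 < T1"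
    and l: "l \<in> basis (-2) (x0 + int (Suc K1), int K2)"
  shows "\<exists>A B C. l = A @ True # B @ True # C \<and> True \<notin> set A \<and> True \<notin> set B \<and> True \<notin> set C
     \<and> A @ False # B @ True # C \<in> basis (-1) (x0 + int (Suc K1), int K2)
     \<and> A @ True # B @ False # C \<in> basis (-1) (x0 + int (Suc K1), int K2)"
proof -
  let ?a = "(x0 + int (Suc K1), int K2)" and ?d = "x0 + int (Suc K1)"
  have na: "nonneg ?a" using x0 by (simp add: nonneg_def)
  have mins: "min (fst ?a) T1 = ?d" "min (snd ?a) T2 = int K2" using K2T x0 by auto
  note words = basis_split_iff[OF na mins]
  obtain l1 l2 where l12: "l = l1 @ l2" and len1: "length l1 = Suc K1"
    using l by (rule basis_split)
  have len2: "length l2 = Suc K2" and ok1: "admissible T1 ?d l1" and ok2: "admissible T2 (int K2) l2"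
    and cn: "-2 + int (ntrue l1) + int (ntrue l2) = 0"
    and su: "in_supp I (final_coord T1 ?d l1, final_coord T2 (int K2) l2)"
    using l l12 words[OF len1] by auto
  have "ntrue l2 \<noteq> 0" using ok2 len2 ntrue_zero_iff[of l2] by (auto simp: admissible_all_false)
  moreover have "\<not> (ntrue l1 = 1 \<and> ntrue l2 = 1)" using split_trues_excluded[OF nc len1 len2] su by blast
  ultimately have "ntrue l1 = 0 \<and> ntrue l2 = 2" using cn by linarith
  then obtain A B C where l2: "l2 = A @ True # B @ True # C" and nA: "True \<notin> set A"
    and nB: "True \<notin> set B" and nC: "True \<notin> set C" and nl1: "True \<notin> set l1"
    using ntrue_two ntrue_zero_iff by metis
  have nt: "ntrue A = 0" "ntrue B = 0" "ntrue C = 0" "ntrue l1 = 0"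
    using nA nB nC nl1 ntrue_zero_iff by blast+
  have drop: "admissible T2 (int K2) (A @ False # B @ True # C)
      \<and> final_coord T2 (int K2) (A @ False # B @ True # C) = final_coord T2 (int K2) l2
      \<and> admissible T2 (int K2) (A @ True # B @ False # C)
      \<and> final_coord T2 (int K2) (A @ True # B @ False # C) \<le> final_coord T2 (int K2) l2
      \<and> 0 \<le> final_coord T2 (int K2) (A @ True # B @ False # C)"
    using drop_one_true[OF nA nB nC, of T2 "int K2"] ok2 len2 K2T l2 by simp
  have "l1 @ A @ False # B @ True # C \<in> basis (-1) ?a"
    using words[OF len1, of "A @ False # B @ True # C"] len2 l2 ok1 drop su nt by auto
  moreover have "l1 @ A @ True # B @ False # C \<in> basis (-1) ?a"
    using words[OF len1, of "A @ True # B @ False # C"] len2 l2 ok1 drop nt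
      in_supp_down[OF MI su] in_supp_nonneg[OF su] by (auto simp: nonneg_def ple_def)
  ultimately show ?thesis using l12 l2 nA nB nC nl1
    by (intro exI[of _ "l1 @ A"] exI[of _ B] exI[of _ C]) auto
qed

lemma nonbounding_cycle_first:
  assumes nc: "\<not> in_supp I (T1 - int K1, T2 - int K2)" and x: "in_supp I x"
    and out: "T1 - int (Suc K1) < fst x"
  shows "\<exists>a (z::'k::comm_ring_1 vec). supported (basis (-1) a) z \<and> bdiff basis (-1) a z = zv
     \<and> \<not> (\<exists>b. supported (basis 0 a) b \<and> bdiff basis 0 a b = z)"
proof -
  define y0 where "y0 = snd x"
  have y0nn: "0 \<le> y0" using x by (simp add: y0_def in_supp_def nonneg_def)
  have P1: "in_supp I (T1 - int K1, y0)"
    using in_supp_down[OF MI x, of "(T1 - int K1, y0)"] out K1T y0nn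
    by (simp add: y0_def nonneg_def ple_def)
  have y0le: "y0 + int K2 < T2"
  proof (rule ccontr)
    assume "\<not> y0 + int K2 < T2"
    then have "in_supp I (T1 - int K1, T2 - int K2)"
      using in_supp_down[OF MI P1, of "(T1 - int K1, T2 - int K2)"] K1T K2T by (simp add: nonneg_def ple_def)
    then show False using nc by blast
  qed
  let ?a = "(int K1, y0 + int (Suc K2))"
  have na: "nonneg ?a" using y0nn by (simp add: nonneg_def)
  have mins: "min (fst ?a) T1 = int K1" "min (snd ?a) T2 = y0 + int (Suc K2)" using K1T y0le by auto
  note words = basis_split_iff[OF na mins]
  have S0: "basis 0 ?a = {}"
  proof (rule ccontr)
    assume "basis 0 ?a \<noteq> {}"
    then obtain l l1 l2 where l: "l \<in> basis 0 ?a" "l = l1 @ l2" and len1: "length l1 = Suc K1"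
      by (metis basis_split ex_in_conv)
    then have "admissible T1 (int K1) l1" and "ntrue l1 = 0" using words[OF len1] by auto
    then show False using len1 ntrue_zero_iff[of l1] by (simp add: admissible_all_false)
  qed
  have len: "length (True # replicate K1 False) = Suc K1" by simp
  have lead: "(True # replicate K1 False) @ replicate (Suc K2) False \<in> basis (-1) ?a"
    unfolding words[OF len] using K1T y0nn P1 by (simp add: admissible_replicate final_coord_replicate)
  show ?thesis
    by (intro exI) (rule indicator_nonbounding[where S=basis and a="(int K1, y0 + int (Suc K2))", OF S0 lead], erule swap_words_first[OF nc y0nn y0le])
qed

lemma nonbounding_cycle_second:
  assumes nc: "\<not> in_supp I (T1 - int K1, T2 - int K2)" and x: "in_supp I x"
    and out: "T2 - int (Suc K2) < snd x"
  shows "\<exists>a (z::'k::comm_ring_1 vec). supported (basis (-1) a) z \<and> bdiff basis (-1) a z = zv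
     \<and> \<not> (\<exists>b. supported (basis 0 a) b \<and> bdiff basis 0 a b = z)"
proof -
  define x0 where "x0 = fst x"
  have x0nn: "0 \<le> x0" using x by (simp add: x0_def in_supp_def nonneg_def)
  have P1: "in_supp I (x0, T2 - int K2)"
    using in_supp_down[OF MI x, of "(x0, T2 - int K2)"] out K2T x0nn
    by (simp add: x0_def nonneg_def ple_def)
  have x0le: "x0 + int K1 < T1"
  proof (rule ccontr)
    assume "\<not> x0 + int K1 < T1"
    then have "in_supp I (T1 - int K1, T2 - int K2)"
      using in_supp_down[OF MI P1, of "(T1 - int K1, T2 - int K2)"] K1T K2T by (simp add: nonneg_def ple_def)
    then show False using nc by blast
  qed
  let ?a = "(x0 + int (Suc K1), int K2)"
  have na: "nonneg ?a" using x0nn by (simp add: nonneg_def)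
  have mins: "min (fst ?a) T1 = x0 + int (Suc K1)" "min (snd ?a) T2 = int K2" using K2T x0le by auto
  note words = basis_split_iff[OF na mins]
  have S0: "basis 0 ?a = {}"
  proof (rule ccontr)
    assume "basis 0 ?a \<noteq> {}"
    then obtain l l1 l2 where l: "l \<in> basis 0 ?a" "l = l1 @ l2" and len1: "length l1 = Suc K1"
      by (metis basis_split ex_in_conv)
    then have "length l2 = Suc K2" "admissible T2 (int K2) l2" and "ntrue l2 = 0" using words[OF len1] by auto
    then show False using ntrue_zero_iff[of l2] by (simp add: admissible_all_false)
  qed
  have lead: "replicate (Suc K1) False @ True # replicate K2 False \<in> basis (-1) ?a"
    unfolding words[OF length_replicate] using K2T x0nn P1
    by (simp add: admissible_replicate final_coord_replicate)
  show ?thesis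
    by (intro exI) (rule indicator_nonbounding[where S=basis and a="(x0 + int (Suc K1), int K2)", OF S0 lead], erule swap_words_second[OF nc x0nn x0le])
qed

lemma H1_criterion:
  "(\<forall>a (z::'k::comm_ring_1 vec). supported (basis (-1) a) z \<and> bdiff basis (-1) a z = zv
       \<longrightarrow> (\<exists>b. supported (basis 0 a) b \<and> bdiff basis 0 a b = z))
   \<longleftrightarrow> in_supp I (T1 - int K1, T2 - int K2)
       \<or> (\<forall>x. in_supp I x \<longrightarrow> fst x \<le> T1 - int (Suc K1) \<and> snd x \<le> T2 - int (Suc K2))"
  (is "?vanish \<longleftrightarrow> ?corner \<or> ?box")
proof
  assume van: ?vanish
  show "?corner \<or> ?box"
  proof (rule ccontr)
    assume "\<not> (?corner \<or> ?box)"
    then obtain x where nc: "\<not> ?corner" and x: "in_supp I x"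
      and out: "T1 - int (Suc K1) < fst x \<or> T2 - int (Suc K2) < snd x" by force
    then obtain a and z :: "'k vec" where "supported (basis (-1) a) z \<and> bdiff basis (-1) a z = zv"
        and "\<not> (\<exists>b. supported (basis 0 a) b \<and> bdiff basis 0 a b = z)"
      using nonbounding_cycle_first[OF nc x] nonbounding_cycle_second[OF nc x] by blast
    then show False using van by blast
  qed
next
  assume "?corner \<or> ?box"
  then show ?vanish
  proof
    assume corner: ?corner
    show ?vanish using cycles_bound_if_corner[OF corner] by blast
  next
    assume box: ?box
    show ?vanish
    proof (intro allI impI)
      fix a and z :: "'k vec"
      assume "supported (basis (-1) a) z \<and> bdiff basis (-1) a z = zv"
      then have "z = zv" using no_words_if_support_in_box[OF box, of a] by (auto simp: zv_def)
      then show "\<exists>b. supported (basis 0 a) b \<and> bdiff basis 0 a b = z"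
        using zero_is_boundary by blast
    qed
  qed
qed

end

lemma cc_quot_nonzero:
  "cc (quot I :: 'k::zero_neq_one gcx) 0 x \<noteq> {zv} \<longleftrightarrow> in_supp I x"
proof (cases "in_supp I x")
  case True
  have "constv 1 \<noteq> (zv :: 'k vec)" by (auto simp: constv_def zv_def fun_eq_iff)
  then have "range constv \<noteq> {zv :: 'k vec}" by (metis rangeI singletonD)
  then show ?thesis using True by (simp add: quot_def)
next
  case False then show ?thesis by (simp add: quot_def)
qed

theorem mainTheorem14:
  fixes I :: "(nat \<times> nat) set" and t k :: "nat \<times> nat"
  assumes "monomial_ideal I"
    and "pos_t_determined t I"
    and "1 \<le> fst k" "1 \<le> snd k" "fst k \<le> fst t + 1" "snd k \<le> snd t + 1"
  shows "cohomology_zero (nak t k (quot I :: 'k::field gcx)) 1 \<longleftrightarrow>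
           (cc (quot I :: 'k gcx) 0 (psub (padd (pint t) (1,1)) (pint k)) \<noteq> {zv}
            \<or> (\<forall>x. nonneg x \<and> cc (quot I :: 'k gcx) 0 x \<noteq> {zv} \<longrightarrow>
                   ple (0,0) x \<and> ple x (psub (pint t) (pint k))))"
proof -
  define K1 where "K1 = fst k - 1"
  define K2 where "K2 = snd k - 1"
  have k: "k = (Suc K1, Suc K2)" using assms(3,4) by (simp add: K1_def K2_def prod_eq_iff)
  interpret nak2_setup I t K1 K2 using assms k by unfold_locales auto
  have basis: "basis_complex (nak t k (quot I :: 'k gcx)) basis"
    unfolding k nak_def nak_basis_def by (intro basis_complex_funpow basis_complex_quot MI)
  have corner: "psub (padd (pint t) (1,1)) (pint k) = (T1 - int K1, T2 - int K2)"
    by (simp add: k psub_def padd_def pint_def)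
  have box: "(\<forall>x. nonneg x \<and> in_supp I x \<longrightarrow> ple (0,0) x \<and> ple x (psub (pint t) (pint k)))
      \<longleftrightarrow> (\<forall>x. in_supp I x \<longrightarrow> fst x \<le> T1 - int (Suc K1) \<and> snd x \<le> T2 - int (Suc K2))"
    by (auto simp: k in_supp_def nonneg_def ple_def psub_def pint_def)
  show ?thesis
    unfolding cohomology_zero_def homology_zero_basis[OF basis] corner cc_quot_nonzero box
    using H1_criterion by simp
qed

end
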